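(* Let $E$ be a locally complete complex lcHs, $G\subset E'$ a separating linear subspace, $\nu\colon\mathbb{D}\to(0,\infty)$ continuous, $U_*\subset\mathbb{D}$, and suppose there is $C>0$ with $|f|_\nu\le C\max\bigl(|f(0)|,\sup_{z\in U_*}|f'(z)|\nu(z)\bigr)$ for all $f\in\mathcal{B}\nu(\mathbb{D})$. Let $f\colon\{0\}\cup(\{1\}\times U_* )\to E$ be such that $\sup_{z\in U_*}p_\alpha(f(1,z))\nu(z)<\infty$ for every $\alpha\in\mathfrak{A}$, and such that for each $e'\in G$ there is $f_{e'}\in\mathcal{B}\nu(\mathbb{D})$ with $f_{e'}(0)=e'(f(0))$ and $f_{e'}'(z)=e'(f(1,z))$ for all $z\in U_*$. Then there exists a unique $F\in\mathcal{B}\nu(\mathbb{D},E)$ with $F(0)=f(0)$ and $(\partial^1_{\mathbb{C}})^EF(z)=f(1,z)$ for all $z\in U_*$.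
   Context: $\mathbb{D}$ is the open unit disc in $\mathbb{C}$; "lcHs" means locally convex Hausdorff space over $\mathbb{C}$ with directed fundamental system of seminorms $(p_\alpha)_{\alpha\in\mathfrak{A}}$. $E$ is locally complete if for every closed bounded absolutely convex $D\subset E$ the space $\bigcup_n nD$ normed by the gauge of $D$ is Banach. $G\subset E'$ is separating if $e'(x)=0$ for all $e'\in G$ implies $x=0$. $\mathcal{O}(\mathbb{D},E)$ is the space of holomorphic $E$-valued functions with complex derivative $(\partial^1_{\mathbb{C}})^Ef(z):=\lim_{h\to0,h\in\mathbb{C}\setminus\{0\}}(f(z+h)-f(z))/h$. $\mathcal{B}\nu(\mathbb{D},E):=\{f\in\mathcal{O}(\mathbb{D},E):|f|_{\nu,\alpha}:=\max(p_\alpha(f(0)),\sup_{z\in\mathbb{D}}p_\alpha((\partial^1_{\mathbb{C}})^Ef(z))\nu(z))<\infty\ \forall\alpha\}$; $\mathcal{B}\nu(\mathbb{D}):=\mathcal{B}\nu(\mathbb{D},\mathbb{C})$ with norm $|f|_\nu=\max(|f(0)|,\sup_{z\in\mathbb{D}}|f'(z)|\nu(z))$. *)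

theory Defs
  imports "HOL-Analysis.Analysis"
begin

text \<open>A complex locally convex Hausdorff space is modelled by a type 'e with addition,
  a complex scalar multiplication sc, and a directed fundamental system of seminorms
  p indexed by the type 'i.\<close>

definition lcHs :: "(complex \<Rightarrow> 'e::ab_group_add \<Rightarrow> 'e) \<Rightarrow> ('i \<Rightarrow> 'e \<Rightarrow> real) \<Rightarrow> bool" where
  "lcHs sc p \<longleftrightarrow>
     (\<forall>a x y. sc a (x + y) = sc a x + sc a y) \<and>
     (\<forall>a b x. sc (a + b) x = sc a x + sc b x) \<and>
     (\<forall>a b x. sc a (sc b x) = sc (a * b) x) \<and>
     (\<forall>x. sc 1 x = x) \<and>
     (\<forall>i x y. p i (x + y) \<le> p i x + p i y) \<and>
     (\<forall>i a x. p i (sc a x) = cmod a * p i x) \<and>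
     (\<forall>i j. \<exists>k. \<forall>x. max (p i x) (p j x) \<le> p k x) \<and>
     (\<forall>x. (\<forall>i. p i x = 0) \<longrightarrow> x = 0)"

definition dual_lc :: "(complex \<Rightarrow> 'e::ab_group_add \<Rightarrow> 'e) \<Rightarrow> ('i \<Rightarrow> 'e \<Rightarrow> real) \<Rightarrow> ('e \<Rightarrow> complex) set" where
  "dual_lc sc p = {e. (\<forall>x y. e (x + y) = e x + e y) \<and> (\<forall>a x. e (sc a x) = a * e x) \<and>
      (\<forall>x. \<forall>\<epsilon>>0. \<exists>i. \<exists>\<delta>>0. \<forall>y. p i (y - x) < \<delta> \<longrightarrow> cmod (e y - e x) < \<epsilon>)}"

definition abs_convex_lc :: "(complex \<Rightarrow> 'e::ab_group_add \<Rightarrow> 'e) \<Rightarrow> 'e set \<Rightarrow> bool" where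
  "abs_convex_lc sc D \<longleftrightarrow>
     (\<forall>x\<in>D. \<forall>y\<in>D. \<forall>a b. cmod a + cmod b \<le> 1 \<longrightarrow> sc a x + sc b y \<in> D)"

definition bounded_lc :: "('i \<Rightarrow> 'e \<Rightarrow> real) \<Rightarrow> 'e set \<Rightarrow> bool" where
  "bounded_lc p D \<longleftrightarrow> (\<forall>i. \<exists>M. \<forall>x\<in>D. p i x \<le> M)"

definition closed_lc :: "('i \<Rightarrow> 'e::ab_group_add \<Rightarrow> real) \<Rightarrow> 'e set \<Rightarrow> bool" where
  "closed_lc p D \<longleftrightarrow> (\<forall>x. (\<forall>i. \<forall>\<epsilon>>0. \<exists>y\<in>D. p i (x - y) < \<epsilon>) \<longrightarrow> x \<in> D)"

definition span_lc :: "(complex \<Rightarrow> 'e \<Rightarrow> 'e) \<Rightarrow> 'e set \<Rightarrow> 'e set" where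
  "span_lc sc D = (\<Union>n::nat. sc (of_nat n) ` D)"

definition gauge_lc :: "(complex \<Rightarrow> 'e \<Rightarrow> 'e) \<Rightarrow> 'e set \<Rightarrow> 'e \<Rightarrow> real" where
  "gauge_lc sc D x = Inf {t::real. t > 0 \<and> x \<in> sc (complex_of_real t) ` D}"

definition locally_complete :: "(complex \<Rightarrow> 'e::ab_group_add \<Rightarrow> 'e) \<Rightarrow> ('i \<Rightarrow> 'e \<Rightarrow> real) \<Rightarrow> bool" where
  "locally_complete sc p \<longleftrightarrow>
     (\<forall>D. closed_lc p D \<and> bounded_lc p D \<and> abs_convex_lc sc D \<longrightarrow>
        (\<forall>X. (\<forall>n. X n \<in> span_lc sc D) \<and>
             (\<forall>\<epsilon>>0. \<exists>N. \<forall>m\<ge>N. \<forall>n\<ge>N. gauge_lc sc D (X m - X n) < \<epsilon>) \<longrightarrow>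
             (\<exists>x\<in>span_lc sc D. (\<lambda>n. gauge_lc sc D (X n - x)) \<longlonglongrightarrow> 0)))"

definition has_derivE :: "(complex \<Rightarrow> 'e \<Rightarrow> 'e::ab_group_add) \<Rightarrow> ('i \<Rightarrow> 'e \<Rightarrow> real) \<Rightarrow>
    (complex \<Rightarrow> 'e) \<Rightarrow> 'e \<Rightarrow> complex \<Rightarrow> bool" where
  "has_derivE sc p F d z \<longleftrightarrow>
     (\<forall>i. ((\<lambda>h. p i (sc (1 / h) (F (z + h) - F z) - d)) \<longlongrightarrow> 0) (at 0))"

definition derivE :: "(complex \<Rightarrow> 'e \<Rightarrow> 'e::ab_group_add) \<Rightarrow> ('i \<Rightarrow> 'e \<Rightarrow> real) \<Rightarrow>
    (complex \<Rightarrow> 'e) \<Rightarrow> complex \<Rightarrow> 'e" where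
  "derivE sc p F z = (SOME d. has_derivE sc p F d z)"

definition Bnu_E :: "(complex \<Rightarrow> 'e \<Rightarrow> 'e::ab_group_add) \<Rightarrow> ('i \<Rightarrow> 'e \<Rightarrow> real) \<Rightarrow>
    (complex \<Rightarrow> real) \<Rightarrow> (complex \<Rightarrow> 'e) set" where
  "Bnu_E sc p \<nu> = {F. (\<forall>z\<in>ball 0 1. \<exists>d. has_derivE sc p F d z) \<and>
      (\<forall>i. bdd_above ((\<lambda>z. p i (derivE sc p F z) * \<nu> z) ` ball 0 1))}"

definition Bnu :: "(complex \<Rightarrow> real) \<Rightarrow> (complex \<Rightarrow> complex) set" where
  "Bnu \<nu> = {f. f holomorphic_on ball 0 1 \<and>
      bdd_above ((\<lambda>z. cmod (deriv f z) * \<nu> z) ` ball 0 1)}"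

text \<open>Supremum of a family of nonnegative reals; the empty supremum is read as 0.\<close>
definition sup0 :: "('a \<Rightarrow> real) \<Rightarrow> 'a set \<Rightarrow> real" where
  "sup0 g A = Sup (insert 0 (g ` A))"

definition norm_nu :: "(complex \<Rightarrow> real) \<Rightarrow> (complex \<Rightarrow> complex) \<Rightarrow> real" where
  "norm_nu \<nu> f = max (cmod (f 0)) (sup0 (\<lambda>z. cmod (deriv f z) * \<nu> z) (ball 0 1))"

end

theory Submission
  imports Defs "HOL-Complex_Analysis.Complex_Analysis"
begin

text \<open>
  Call a functional
  phi on B_nu(D) admissible if it is linear, bounded, and sequentially continuous for pointwise
  convergence of values and first derivatives.  Using the sampling inequality and a minimax argument
  on the compact unit ball of B_nu(D) (instead of Hahn-Banach), every admissible phi of norm A is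
  approximated, up to A/2, by a finite combination of the sampling functionals g |-> g(0) and
  g |-> nu(w) g'(w), w in U_*, whose coefficients have l1-norm at most 2 C A.  Iterating, phi
  becomes a series of such combinations.  Applying the same coefficients to the data f(0) and
  nu(w) f(1,w) gives a series in E all of whose terms lie in multiples of one bounded disc, so it
  converges by local completeness, to a vector x with e(x) = phi(f_e) for all e in G.
  Evaluations, derivatives and difference quotients at z are admissible; they define F(z) and show
  that F is holomorphic with derivative bounds.  Uniqueness holds because a scalar function in
  B_nu(D) with vanishing data on U_* vanishes by the sampling inequality.
\<close>

section \<open>Locally convex spaces and bounded discs\<close>

locale lc_space =
  fixes sc :: "complex \<Rightarrow> 'e::ab_group_add \<Rightarrow> 'e" and p :: "'i \<Rightarrow> 'e \<Rightarrow> real"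
  assumes lcHs: "lcHs sc p"
begin

lemma sc_add_left: "sc (a + b) x = sc a x + sc b x"
  and sc_sc: "sc a (sc b x) = sc (a * b) x"
  and sc_one [simp]: "sc 1 x = x"
  and p_triangle: "p i (x + y) \<le> p i x + p i y"
  and p_sc: "p i (sc a x) = cmod a * p i x"
  and p_eq_0_imp_0: "(\<And>i. p i x = 0) \<Longrightarrow> x = 0"
  using lcHs unfolding lcHs_def by auto

lemma sc_zero_left [simp]: "sc 0 x = 0"
  using sc_add_left[of 0 0 x] by simp

lemma sc_minus_one: "sc (-1) x = - x"
  using sc_add_left[of "-1" 1 x] by (simp add: eq_neg_iff_add_eq_0)

lemma p_zero [simp]: "p i 0 = 0"
  using p_sc[of i 0 0] by simp

lemma p_minus: "p i (- x) = p i x"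
  using p_sc[of i "-1" x] by (simp add: sc_minus_one)

lemma p_nonneg: "0 \<le> p i x"
  using p_triangle[of i x "- x"] p_minus[of i x] by simp

lemma p_minus_commute: "p i (x - y) = p i (y - x)"
  by (metis minus_diff_eq p_minus)

lemma p_diff_le: "p i (x - y) \<le> p i x + p i y"
  using p_triangle[of i x "- y"] p_minus[of i y] by simp

lemma p_triangle_diff: "p i (x - z) \<le> p i (x - y) + p i (y - z)"
  using p_triangle[of i "x - y" "y - z"] by simp

lemma p_sum: "p i (\<Sum>k\<in>A. f k) \<le> (\<Sum>k\<in>A. p i (f k))"
  by (induction A rule: infinite_finite_induct) (auto intro: order_trans[OF p_triangle])

context
  fixes e assumes e: "e \<in> dual_lc sc p"
begin

lemma dual_add: "e (x + y) = e x + e y"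
  and dual_sc: "e (sc a x) = a * e x"
  using e unfolding dual_lc_def by auto

lemma dual_zero [simp]: "e 0 = 0"
  using dual_sc[of 0 0] by simp

lemma dual_diff: "e (x - y) = e x - e y"
  using dual_add[of x "- y"] dual_sc[of "-1" y] by (simp add: sc_minus_one)

lemma dual_sum: "e (\<Sum>k\<in>A. f k) = (\<Sum>k\<in>A. e (f k))"
  by (induction A rule: infinite_finite_induct) (auto simp: dual_add)

lemma dual_bounded: "\<exists>i. \<exists>K\<ge>0. \<forall>y. cmod (e y) \<le> K * p i y"
proof -
  have "\<forall>x. \<forall>\<epsilon>>0. \<exists>i. \<exists>\<delta>>0. \<forall>y. p i (y - x) < \<delta> \<longrightarrow> cmod (e y - e x) < \<epsilon>"
    using e unfolding dual_lc_def by blast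
  then obtain i \<delta> where "\<delta> > 0" "\<And>y. p i (y - 0) < \<delta> \<Longrightarrow> cmod (e y - e 0) < 1"
    by (meson zero_less_one)
  then have small: "\<And>y. p i y < \<delta> \<Longrightarrow> cmod (e y) < 1" by simp
  have near: "cmod (e y) \<le> 2 / \<delta> * p i y + 2 / \<delta> * \<eta>" if "\<eta> > 0" for y \<eta>
  proof -
    define t where "t = \<delta> / (2 * (p i y + \<eta>))"
    have "t > 0" using \<open>\<delta> > 0\<close> \<open>\<eta> > 0\<close> p_nonneg[of i y] by (simp add: t_def)
    have "p i (sc (of_real t) y) = \<delta> / 2 * (p i y / (p i y + \<eta>))"
      using \<open>t > 0\<close> \<open>\<delta> > 0\<close> \<open>\<eta> > 0\<close> p_nonneg[of i y]
      by (simp add: p_sc t_def abs_of_pos del: of_real_divide)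
    also have "\<dots> \<le> \<delta> / 2"
      using \<open>\<delta> > 0\<close> \<open>\<eta> > 0\<close> p_nonneg[of i y] by (intro mult_left_le) auto
    also have "\<dots> < \<delta>" using \<open>\<delta> > 0\<close> by simp
    finally have "cmod (e (sc (of_real t) y)) < 1" by (rule small)
    then have "t * cmod (e y) < 1"
      using \<open>t > 0\<close> by (simp add: dual_sc norm_mult)
    then show ?thesis
      using \<open>\<delta> > 0\<close> \<open>\<eta> > 0\<close> p_nonneg[of i y] by (simp add: t_def field_simps)
  qed
  have "cmod (e y) \<le> 2 / \<delta> * p i y" for y
  proof (rule field_le_epsilon)
    fix \<eta> :: real assume "\<eta> > 0"
    then show "cmod (e y) \<le> 2 / \<delta> * p i y + \<eta>"
      using near[of "\<eta> * \<delta> / 2" y] \<open>\<delta> > 0\<close> by simp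
  qed
  then show ?thesis using \<open>\<delta> > 0\<close> by (intro exI[of _ i] exI[of _ "2 / \<delta>"]) simp
qed

lemma dual_tendsto_of_p_bound:
  assumes "\<beta> \<longlonglongrightarrow> 0" "\<And>i n. p i (x - xs n) \<le> \<beta> n * M i"
  shows "(\<lambda>n. e (xs n)) \<longlonglongrightarrow> e x"
proof -
  obtain i K where K: "K \<ge> 0" "\<And>y. cmod (e y) \<le> K * p i y" using dual_bounded by blast
  have bound: "cmod (e (xs n) - e x) \<le> K * M i * \<beta> n" for n
    using K(2)[of "x - xs n"] mult_left_mono[OF assms(2)[of i n] K(1)]
    by (simp add: dual_diff norm_minus_commute mult_ac)
  have "(\<lambda>n. K * M i * \<beta> n) \<longlonglongrightarrow> 0"
    using tendsto_mult_left[OF assms(1)] by simp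
  then have "(\<lambda>n. e (xs n) - e x) \<longlonglongrightarrow> 0"
    by (rule Lim_null_comparison[OF always_eventually, rotated]) (use bound in auto)
  then show ?thesis by (simp add: LIM_zero_iff)
qed

end

lemma has_derivE_unique:
  assumes "has_derivE sc p F d z" "has_derivE sc p F d' z"
  shows "d = d'"
proof -
  have "p i (d - d') = 0" for i
  proof -
    define q where "q h = sc (1 / h) (F (z + h) - F z)" for h
    have "((\<lambda>h. p i (q h - d) + p i (q h - d')) \<longlongrightarrow> 0 + 0) (at 0)"
      using assms unfolding has_derivE_def q_def by (intro tendsto_add) auto
    moreover have "p i (d - d') \<le> p i (q h - d) + p i (q h - d')" for h
      using p_diff_le[of i "q h - d'" "q h - d"] by simp
    ultimately have "p i (d - d') \<le> 0 + 0"
      by (intro tendsto_le[OF _ _ tendsto_const]) (auto intro: always_eventually)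
    then show ?thesis using p_nonneg[of i "d - d'"] by simp
  qed
  then show ?thesis using p_eq_0_imp_0[of "d - d'"] by simp
qed

lemma derivE_eqI: "has_derivE sc p F d z \<Longrightarrow> derivE sc p F z = d"
  unfolding derivE_def by (rule some_equality) (auto intro: has_derivE_unique)

lemma has_derivE_derivE: "\<exists>d. has_derivE sc p F d z \<Longrightarrow> has_derivE sc p F (derivE sc p F z) z"
  unfolding derivE_def by (rule someI_ex)

lemma dual_has_field_derivative:
  assumes e: "e \<in> dual_lc sc p" and F: "has_derivE sc p F d z"
  shows "((\<lambda>w. e (F w)) has_field_derivative e d) (at z)"
proof -
  obtain i K where K: "K \<ge> 0" "\<And>y. cmod (e y) \<le> K * p i y" using dual_bounded[OF e] by blast
  have "((\<lambda>h. K * p i (sc (1 / h) (F (z + h) - F z) - d)) \<longlongrightarrow> K * 0) (at 0)"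
    using F unfolding has_derivE_def by (intro tendsto_mult_left) blast
  then have "((\<lambda>h. K * p i (sc (1 / h) (F (z + h) - F z) - d)) \<longlongrightarrow> 0) (at 0)"
    by simp
  then have "((\<lambda>h. e (sc (1 / h) (F (z + h) - F z) - d)) \<longlongrightarrow> 0) (at 0)"
    by (rule Lim_null_comparison[OF always_eventually, rotated]) (use K(2) in auto)
  then have "((\<lambda>h. e (sc (1 / h) (F (z + h) - F z) - d) + e d) \<longlongrightarrow> 0 + e d) (at 0)"
    by (intro tendsto_add tendsto_const)
  moreover have "e (sc (1 / h) (F (z + h) - F z) - d) + e d = (e (F (z + h)) - e (F z)) / h" for h
    by (simp add: dual_diff[OF e] dual_sc[OF e] divide_inverse mult.commute)
  ultimately show ?thesis unfolding DERIV_def by simp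
qed

definition bound_disc :: "('i \<Rightarrow> real) \<Rightarrow> 'e set" where
  "bound_disc M = {x. \<forall>i. p i x \<le> M i}"

lemma bounded_lc_bound_disc: "bounded_lc p (bound_disc M)"
  unfolding bounded_lc_def bound_disc_def by blast

lemma closed_lc_bound_disc: "closed_lc p (bound_disc M)"
  unfolding closed_lc_def
proof (intro allI impI)
  fix x assume near: "\<forall>i. \<forall>\<epsilon>>0. \<exists>y\<in>bound_disc M. p i (x - y) < \<epsilon>"
  have "p i x \<le> M i + \<epsilon>" if "\<epsilon> > 0" for i \<epsilon>
  proof -
    obtain y where y: "y \<in> bound_disc M" "p i (x - y) < \<epsilon>" using near \<open>\<epsilon> > 0\<close> by blast
    have "p i x \<le> p i (x - y) + p i y" using p_triangle[of i "x - y" y] by simp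
    moreover have "p i y \<le> M i" using y(1) by (simp add: bound_disc_def)
    ultimately show ?thesis using y(2) by linarith
  qed
  then show "x \<in> bound_disc M"
    unfolding bound_disc_def by (auto intro: field_le_epsilon)
qed

context
  fixes M :: "'i \<Rightarrow> real" assumes M_nonneg: "\<And>i. 0 \<le> M i"
begin

lemma abs_convex_lc_bound_disc: "abs_convex_lc sc (bound_disc M)"
  unfolding abs_convex_lc_def
proof (intro ballI allI impI)
  fix x y a b assume "x \<in> bound_disc M" "y \<in> bound_disc M" and ab: "cmod a + cmod b \<le> 1"
  have "p i (sc a x + sc b y) \<le> M i" for i
  proof -
    have "p i (sc a x + sc b y) \<le> cmod a * p i x + cmod b * p i y"
      using p_triangle[of i "sc a x" "sc b y"] by (simp add: p_sc)
    also have "\<dots> \<le> cmod a * M i + cmod b * M i"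
      using \<open>x \<in> bound_disc M\<close> \<open>y \<in> bound_disc M\<close> unfolding bound_disc_def
      by (intro add_mono mult_left_mono) auto
    also have "\<dots> \<le> M i"
      using mult_right_mono[OF ab M_nonneg[of i]] by (simp add: distrib_right)
    finally show ?thesis .
  qed
  then show "sc a x + sc b y \<in> bound_disc M" unfolding bound_disc_def by blast
qed

lemma sc_image_bound_disc_I:
  assumes "t > 0" "\<And>i. p i x \<le> t * M i"
  shows "x \<in> sc (of_real t) ` bound_disc M"
proof
  show "x = sc (of_real t) (sc (of_real (1 / t)) x)"
    using \<open>t > 0\<close> by (simp add: sc_sc)
  have "p i (sc (of_real (1 / t)) x) \<le> M i" for i
  proof -
    have "p i (sc (of_real (1 / t)) x) = p i x / t"
      using \<open>t > 0\<close> by (simp add: p_sc norm_divide)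
    also have "\<dots> \<le> M i" using assms by (simp add: divide_le_eq mult.commute)
    finally show ?thesis .
  qed
  then show "sc (of_real (1 / t)) x \<in> bound_disc M" unfolding bound_disc_def by blast
qed

lemma span_bound_disc_I:
  assumes "t \<ge> 0" "\<And>i. p i x \<le> t * M i"
  shows "x \<in> span_lc sc (bound_disc M)"
proof -
  define n where "n = nat \<lceil>t\<rceil> + 1"
  have "t \<le> real n" "real n > 0" unfolding n_def by linarith+
  then have "p i x \<le> real n * M i" for i
    using assms(2)[of i] mult_right_mono[OF \<open>t \<le> real n\<close> M_nonneg[of i]] by linarith
  then have "x \<in> sc (of_real (real n)) ` bound_disc M"
    using \<open>real n > 0\<close> by (intro sc_image_bound_disc_I) auto
  then show ?thesis unfolding span_lc_def by auto
qed

lemma span_bound_disc_D: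
  assumes "x \<in> span_lc sc (bound_disc M)"
  obtains t where "t \<ge> 0" "\<And>i. p i x \<le> t * M i"
proof -
  obtain n y where "y \<in> bound_disc M" "x = sc (of_nat n) y"
    using assms unfolding span_lc_def by auto
  then have "p i x \<le> real n * M i" for i
    unfolding bound_disc_def by (simp add: p_sc mult_left_mono)
  then show thesis using that[of "real n"] by simp
qed

lemma gauge_bound_disc_le:
  assumes "t \<ge> 0" "\<And>i. p i x \<le> t * M i"
  shows "gauge_lc sc (bound_disc M) x \<le> t"
proof (rule field_le_epsilon)
  fix \<delta> :: real assume "\<delta> > 0"
  have "p i x \<le> (t + \<delta>) * M i" for i
    using assms(2)[of i] mult_right_mono[of t "t + \<delta>", OF _ M_nonneg[of i]] \<open>\<delta> > 0\<close> by linarith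
  then have "x \<in> sc (of_real (t + \<delta>)) ` bound_disc M"
    using assms(1) \<open>\<delta> > 0\<close> by (intro sc_image_bound_disc_I) auto
  then have "t + \<delta> \<in> {s. s > 0 \<and> x \<in> sc (of_real s) ` bound_disc M}"
    using assms(1) \<open>\<delta> > 0\<close> by simp
  then show "gauge_lc sc (bound_disc M) x \<le> t + \<delta>"
    unfolding gauge_lc_def by (rule cInf_lower) (auto intro: bdd_belowI[of _ 0])
qed

lemma p_le_of_gauge_less:
  assumes "x \<in> span_lc sc (bound_disc M)" "gauge_lc sc (bound_disc M) x < t"
  shows "p i x \<le> t * M i"
proof -
  let ?S = "{s. s > 0 \<and> x \<in> sc (of_real s) ` bound_disc M}"
  obtain r where "r \<ge> 0" and r: "\<And>i. p i x \<le> r * M i"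
    by (rule span_bound_disc_D[OF assms(1)]) blast
  have "p i x \<le> (r + 1) * M i" for i
    using r[of i] M_nonneg[of i] by (simp add: distrib_right)
  then have "x \<in> sc (of_real (r + 1)) ` bound_disc M"
    using \<open>r \<ge> 0\<close> by (intro sc_image_bound_disc_I) auto
  then have "r + 1 \<in> ?S" using \<open>r \<ge> 0\<close> by (simp del: of_real_add)
  then have "?S \<noteq> {}" by blast
  then obtain s where s: "s \<in> ?S" "s < t"
    using cInf_lessD[OF _ assms(2)[unfolded gauge_lc_def]] by blast
  then obtain y where "y \<in> bound_disc M" "x = sc (of_real s) y" by blast
  then have "p i x \<le> s * M i"
    using s unfolding bound_disc_def by (simp add: p_sc mult_left_mono)
  also have "\<dots> \<le> t * M i" using s M_nonneg by (simp add: mult_right_mono)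
  finally show ?thesis .
qed

lemma locally_complete_gauge_limit:
  assumes "locally_complete sc p" "xs 0 = 0" "\<beta> \<longlonglongrightarrow> 0" "\<And>n. 0 \<le> \<beta> n"
    and Cauchy: "\<And>i m n. n \<le> m \<Longrightarrow> p i (xs m - xs n) \<le> \<beta> n * M i"
  obtains x where "x \<in> span_lc sc (bound_disc M)"
    "(\<lambda>n. gauge_lc sc (bound_disc M) (xs n - x)) \<longlonglongrightarrow> 0"
proof -
  let ?D = "bound_disc M"
  have span: "xs n \<in> span_lc sc ?D" for n
    using assms(2,4) Cauchy[of 0 n] by (intro span_bound_disc_I[of "\<beta> 0"]) auto
  have gauge_le: "gauge_lc sc ?D (xs m - xs n) \<le> \<beta> (min m n)" for m n
  proof (cases "n \<le> m")
    case True
    then show ?thesis using assms(4) Cauchy by (intro gauge_bound_disc_le) auto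
  next
    case False
    then show ?thesis
      using assms(4) Cauchy[of m n] by (intro gauge_bound_disc_le) (auto simp: p_minus_commute)
  qed
  have "\<exists>N. \<forall>m\<ge>N. \<forall>n\<ge>N. gauge_lc sc ?D (xs m - xs n) < \<epsilon>" if "\<epsilon> > 0" for \<epsilon>
  proof -
    obtain N where N: "\<And>n. n \<ge> N \<Longrightarrow> \<beta> n < \<epsilon>"
      using order_tendstoD(2)[OF assms(3) \<open>\<epsilon> > 0\<close>] by (auto simp: eventually_sequentially)
    have "gauge_lc sc ?D (xs m - xs n) < \<epsilon>" if "m \<ge> N" "n \<ge> N" for m n
      using gauge_le[of m n] N[of "min m n"] that by simp
    then show ?thesis by blast
  qed
  then obtain x where "x \<in> span_lc sc ?D" "(\<lambda>n. gauge_lc sc ?D (xs n - x)) \<longlonglongrightarrow> 0"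
    using assms(1) span bounded_lc_bound_disc closed_lc_bound_disc abs_convex_lc_bound_disc
    unfolding locally_complete_def by blast
  then show thesis by (rule that)
qed

text \<open>A series whose tails are bounded by a fixed weight M is Cauchy in the normed space spanned
  by bound_disc M, which is complete since E is locally complete.\<close>

lemma locally_complete_limit:
  assumes "locally_complete sc p" "xs 0 = 0" "\<beta> \<longlonglongrightarrow> 0" "\<And>n. 0 \<le> \<beta> n"
    and Cauchy: "\<And>i m n. n \<le> m \<Longrightarrow> p i (xs m - xs n) \<le> \<beta> n * M i"
  obtains x where "\<And>i n. p i (x - xs n) \<le> \<beta> n * M i"
proof -
  let ?D = "bound_disc M"
  obtain x where x_span: "x \<in> span_lc sc ?D" and lim: "(\<lambda>n. gauge_lc sc ?D (xs n - x)) \<longlonglongrightarrow> 0"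
    using locally_complete_gauge_limit[OF assms] by blast
  obtain r where "r \<ge> 0" and r: "\<And>i. p i x \<le> r * M i"
    using x_span by (rule span_bound_disc_D) blast
  have diff_span: "xs n - x \<in> span_lc sc ?D" for n
  proof (rule span_bound_disc_I[of "\<beta> 0 + r"])
    show "0 \<le> \<beta> 0 + r" using assms(4) \<open>r \<ge> 0\<close> by simp
    show "p i (xs n - x) \<le> (\<beta> 0 + r) * M i" for i
      using p_diff_le[of i "xs n" x] Cauchy[of 0 n i] assms(2) r[of i] by (simp add: distrib_right)
  qed
  have near: "\<forall>\<^sub>F m in sequentially. p i (xs m - x) \<le> \<delta> * M i" if "\<delta> > 0" for i \<delta>
    using order_tendstoD(2)[OF lim that]
    by (rule eventually_mono) (rule p_le_of_gauge_less[OF diff_span])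
  show thesis
  proof (rule that, rule field_le_epsilon)
    fix i n and \<eta> :: real assume "\<eta> > 0"
    define \<delta> where "\<delta> = \<eta> / (M i + 1)"
    have "\<delta> > 0" "\<delta> * M i \<le> \<eta>"
      using \<open>\<eta> > 0\<close> M_nonneg[of i] by (auto simp: \<delta>_def field_simps)
    obtain m where "m \<ge> n" "p i (xs m - x) \<le> \<delta> * M i"
      using eventually_conj[OF eventually_ge_at_top[of n] near[of \<delta> i, OF \<open>\<delta> > 0\<close>]]
      by (auto simp: eventually_sequentially)
    then have "p i (x - xs n) \<le> \<delta> * M i + \<beta> n * M i"
      using p_triangle_diff[of i x "xs n" "xs m"] Cauchy[of n m i] by (simp add: p_minus_commute)
    then show "p i (x - xs n) \<le> \<beta> n * M i + \<eta>" using \<open>\<delta> * M i \<le> \<eta>\<close> by linarith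
  qed
qed

end

end

lemma deriv_linear:
  assumes "g holomorphic_on S" "h holomorphic_on S" "open S" "z \<in> S"
  shows "deriv (\<lambda>w. a * g w + b * h w) z = a * deriv g z + b * deriv h z"
proof -
  have "g field_differentiable at z" "h field_differentiable at z"
    using assms holomorphic_on_imp_differentiable_at by blast+
  then show ?thesis by (subst deriv_add) (auto intro!: derivative_intros simp: deriv_cmult)
qed

lemma holomorphic_Lipschitz:
  assumes "g holomorphic_on S" "open S" "convex K" "K \<subseteq> S"
    and "\<And>w. w \<in> K \<Longrightarrow> cmod (deriv g w) \<le> B" "z \<in> K" "w \<in> K"
  shows "cmod (g z - g w) \<le> B * cmod (z - w)"
proof (rule field_differentiable_bound[OF assms(3) _ assms(5-7)])
  fix x assume "x \<in> K"
  then have "g field_differentiable at x"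
    using assms(1,2,4) holomorphic_on_imp_differentiable_at by blast
  then show "(g has_field_derivative deriv g x) (at x within K)"
    using DERIV_deriv_iff_field_differentiable has_field_derivative_at_within by blast
qed

lemma second_deriv_bound:
  assumes "g holomorphic_on S" "open S" "cball z (2 * r) \<subseteq> S" "r > 0"
    and "\<And>w. w \<in> cball z (2 * r) \<Longrightarrow> cmod (deriv g w) \<le> B"
    and "w \<in> cball z r"
  shows "cmod (deriv (deriv g) w) \<le> B / r"
proof -
  have sub: "cball w r \<subseteq> cball z (2 * r)"
  proof
    fix x assume "x \<in> cball w r"
    then show "x \<in> cball z (2 * r)" using assms(6) dist_triangle[of z x w] by simp
  qed
  have "deriv g holomorphic_on S" using assms(1,2) by (rule holomorphic_deriv)
  have "cmod ((deriv ^^ 1) (deriv g) w) \<le> fact 1 * B / r ^ 1"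
  proof (rule Cauchy_inequality)
    show "deriv g holomorphic_on ball w r"
      using \<open>deriv g holomorphic_on S\<close> sub assms(3) ball_subset_cball
      by (blast intro: holomorphic_on_subset)
    show "continuous_on (cball w r) (deriv g)"
      using \<open>deriv g holomorphic_on S\<close> sub assms(3)
      by (blast intro: holomorphic_on_imp_continuous_on continuous_on_subset)
    show "cmod (deriv g x) \<le> B" if "cmod (w - x) = r" for x
      using that sub by (intro assms(5)) (auto simp: dist_norm)
  qed (use \<open>r > 0\<close> in simp)
  then show ?thesis by simp
qed

lemma difference_quotient_bound:
  assumes "g holomorphic_on S" "open S" "cball z (2 * r) \<subseteq> S" "r > 0"
    and "\<And>w. w \<in> cball z (2 * r) \<Longrightarrow> cmod (deriv g w) \<le> B"
    and "h \<noteq> 0" "cmod h \<le> r"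
  shows "cmod ((g (z + h) - g z) / h - deriv g z) \<le> B / r * cmod h"
proof -
  have "cball z r \<subseteq> cball z (2 * r)" using \<open>r > 0\<close> by (simp add: subset_cball)
  then have small: "cball z (cmod h) \<subseteq> cball z r" "cball z r \<subseteq> S"
    using assms(3,7) by (auto simp: subset_cball)
  have "deriv g holomorphic_on S" using assms(1,2) by (rule holomorphic_deriv)
  have deriv_near: "cmod (deriv g w - deriv g z) \<le> B / r * cmod h" if "w \<in> cball z (cmod h)" for w
  proof -
    have "cmod (deriv g w - deriv g z) \<le> B / r * cmod (w - z)"
      using small that second_deriv_bound[OF assms(1-5)]
      by (intro holomorphic_Lipschitz[OF \<open>deriv g holomorphic_on S\<close> \<open>open S\<close> convex_cball]) auto
    also have "\<dots> \<le> B / r * cmod h"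
      using that assms(4) order_trans[OF norm_ge_zero assms(5)[of z]] \<open>r > 0\<close>
      by (intro mult_left_mono) (auto simp: dist_norm norm_minus_commute)
    finally show ?thesis .
  qed
  define u where "u w = g w - w * deriv g z" for w
  have "cmod (u (z + h) - u z) \<le> B / r * cmod h * cmod ((z + h) - z)"
  proof (rule field_differentiable_bound[OF convex_cball])
    fix w assume "w \<in> cball z (cmod h)"
    then have "g field_differentiable at w"
      using small assms(1,2) holomorphic_on_imp_differentiable_at by blast
    then have "(g has_field_derivative deriv g w) (at w)"
      by (simp add: DERIV_deriv_iff_field_differentiable)
    then have "(u has_field_derivative deriv g w - deriv g z) (at w)"
      unfolding u_def by (auto intro!: derivative_eq_intros)
    then show "(u has_field_derivative deriv g w - deriv g z) (at w within cball z (cmod h))"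
      by (rule has_field_derivative_at_within)
    show "cmod (deriv g w - deriv g z) \<le> B / r * cmod h" using deriv_near \<open>w \<in> _\<close> .
  qed (auto simp: dist_norm)
  then have "cmod (g (z + h) - g z - h * deriv g z) \<le> B / r * cmod h * cmod h"
    by (simp add: u_def algebra_simps)
  moreover have "(g (z + h) - g z) / h - deriv g z = (g (z + h) - g z - h * deriv g z) / h"
    using \<open>h \<noteq> 0\<close> by (simp add: field_simps)
  ultimately show ?thesis
    using \<open>h \<noteq> 0\<close> by (simp add: norm_divide pos_divide_le_eq)
qed

lemma deriv_tendsto_of_locally_uniform:
  assumes "open S" "\<And>n. gs n holomorphic_on S"
    and "\<And>K. compact K \<Longrightarrow> K \<subseteq> S \<Longrightarrow> uniform_limit K gs g sequentially" "z \<in> S"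
  shows "(\<lambda>n. deriv (gs n) z) \<longlonglongrightarrow> deriv g z"
proof -
  obtain \<delta> where "\<delta> > 0" "cball z \<delta> \<subseteq> S" using assms(1,4) open_contains_cball by blast
  then have "uniform_limit (ball z \<delta>) gs g sequentially"
    using assms(3)[OF compact_cball] uniform_limit_on_subset ball_subset_cball by blast
  moreover have "\<forall>\<^sub>F n in sequentially. gs n holomorphic_on ball z \<delta>"
    using assms(2) \<open>cball z \<delta> \<subseteq> S\<close> ball_subset_cball
    by (intro always_eventually allI) (blast intro: holomorphic_on_subset)
  ultimately have "(\<lambda>n. (deriv ^^ 1) (gs n) z) \<longlonglongrightarrow> (deriv ^^ 1) g z"
    using \<open>\<delta> > 0\<close> by (intro higher_deriv_complex_uniform_limit) auto
  then show ?thesis by simp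
qed

lemma compact_subset_ball_imp_cball:
  fixes K :: "'a::real_normed_vector set"
  assumes "compact K" "K \<subseteq> ball 0 1"
  obtains \<rho> where "\<rho> < 1" "K \<subseteq> cball 0 \<rho>"
proof (cases "K = {}")
  case False
  have "compact (norm ` K)" using assms(1) by (intro compact_continuous_image continuous_intros)
  then obtain x where "x \<in> K" "\<And>y. y \<in> K \<Longrightarrow> norm y \<le> norm x"
    using compact_attains_sup[of "norm ` K"] False by auto
  then show ?thesis
    using assms(2) by (intro that[of "norm x"]) (auto simp: subset_iff)
qed (use that[of 0] in simp)

lemma max0_diff_sq_le:
  fixes a s :: real
  shows "(max 0 (a - s))\<^sup>2 \<le> (max 0 a - s)\<^sup>2"
proof (cases "a - s \<le> 0")
  case False
  then show ?thesis by (intro power_mono) auto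
qed simp

lemma sum_sq_first_order:
  fixes \<mu> v :: "nat \<Rightarrow> real"
  assumes "\<And>t. 0 < t \<Longrightarrow> t \<le> 1 \<Longrightarrow> (\<Sum>j<n. (\<mu> j)\<^sup>2) \<le> (\<Sum>j<n. (\<mu> j - t * v j)\<^sup>2)"
  shows "(\<Sum>j<n. \<mu> j * v j) \<le> 0"
proof (rule ccontr)
  define P Q where "P = (\<Sum>j<n. \<mu> j * v j)" and "Q = (\<Sum>j<n. (v j)\<^sup>2)"
  assume "\<not> (\<Sum>j<n. \<mu> j * v j) \<le> 0"
  then have "P > 0" by (simp add: P_def)
  have "Q \<ge> 0" unfolding Q_def by (intro sum_nonneg) auto
  define t where "t = min 1 (P / (Q + 1))"
  have "0 < t" "t \<le> 1" using \<open>P > 0\<close> \<open>Q \<ge> 0\<close> by (auto simp: t_def)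
  have "(\<Sum>j<n. (\<mu> j - t * v j)\<^sup>2) = (\<Sum>j<n. (\<mu> j)\<^sup>2) - t * (2 * P - t * Q)"
    by (simp add: P_def Q_def power2_eq_square algebra_simps sum.distrib sum_subtractf sum_distrib_left)
  moreover have "t * Q \<le> P / (Q + 1) * Q"
    using \<open>Q \<ge> 0\<close> by (intro mult_right_mono) (auto simp: t_def)
  moreover have "P / (Q + 1) * Q < P"
    using \<open>P > 0\<close> \<open>Q \<ge> 0\<close> by (simp add: field_simps)
  ultimately have "(\<Sum>j<n. (\<mu> j - t * v j)\<^sup>2) < (\<Sum>j<n. (\<mu> j)\<^sup>2)"
    using \<open>0 < t\<close> \<open>P > 0\<close> by (smt (verit) mult_pos_pos)
  then show False using assms[OF \<open>0 < t\<close> \<open>t \<le> 1\<close>] by simp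
qed

lemma continuous_le_at_closure_point:
  fixes q :: "'a::metric_space \<Rightarrow> real"
  assumes "continuous_on S q" "open S" "w \<in> S" "w \<in> closure T" "\<And>x. x \<in> T \<Longrightarrow> q x \<le> R"
  shows "q w \<le> R"
proof -
  obtain x where "\<And>k. x k \<in> T" "x \<longlonglongrightarrow> w" using assms(4) closure_sequential by blast
  moreover have "isCont q w" using assms(1-3) continuous_on_eq_continuous_at by blast
  ultimately show ?thesis
    by (intro LIMSEQ_le_const2[OF isCont_tendsto_compose[of w q x]]) (auto intro: assms(5))
qed

lemma norm_le_of_rotations:
  assumes "\<And>k. k < 4 \<Longrightarrow> Re (\<i> ^ k * z) \<le> R"
  shows "cmod z \<le> 2 * R"
proof -
  have "Re z \<le> R" "- Im z \<le> R" "- Re z \<le> R" "Im z \<le> R"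
    using assms[of 0] assms[of 1] assms[of 2] assms[of 3] by (simp_all add: power2_eq_square power3_eq_cube)
  then show ?thesis using cmod_le[of z] by linarith
qed

lemma geometric_tail_le: "(\<Sum>k\<in>{n..<m}. (1/2::real) ^ k) \<le> 2 * (1/2) ^ n"
proof (cases "n \<le> m")
  case True
  have sum_lt: "(\<Sum>k<j. (1/2::real) ^ k) = 2 - 2 * (1/2) ^ j" for j
    using geometric_sum[of "1/2::real" j] by (simp add: field_simps)
  have "(\<Sum>k\<in>{n..<m}. (1/2::real) ^ k) = (\<Sum>k<m. (1/2) ^ k) - (\<Sum>k<n. (1/2) ^ k)"
    using True by (simp add: sum_diff_nat_ivl lessThan_atLeast0)
  then show ?thesis by (simp add: sum_lt)
qed simp

section \<open>The weighted Bloch space\<close>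

lemma sup0_upper: "bdd_above (f ` A) \<Longrightarrow> x \<in> A \<Longrightarrow> f x \<le> sup0 f A"
  unfolding sup0_def by (rule cSup_upper) auto

lemma sup0_least: "0 \<le> B \<Longrightarrow> (\<And>x. x \<in> A \<Longrightarrow> f x \<le> B) \<Longrightarrow> sup0 f A \<le> B"
  unfolding sup0_def by (rule cSup_least) auto

lemma Bnu_holomorphic: "g \<in> Bnu \<nu> \<Longrightarrow> g holomorphic_on ball 0 1"
  unfolding Bnu_def by blast

lemma norm_nu_ge_value: "cmod (g 0) \<le> norm_nu \<nu> g"
  unfolding norm_nu_def by simp

lemma norm_nu_nonneg: "0 \<le> norm_nu \<nu> g"
  by (rule order_trans[OF norm_ge_zero norm_nu_ge_value])

lemma norm_nu_ge_deriv:
  assumes "g \<in> Bnu \<nu>" "z \<in> ball 0 1"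
  shows "cmod (deriv g z) * \<nu> z \<le> norm_nu \<nu> g"
proof -
  have "bdd_above ((\<lambda>z. cmod (deriv g z) * \<nu> z) ` ball 0 1)"
    using assms(1) by (simp add: Bnu_def)
  then have "cmod (deriv g z) * \<nu> z \<le> sup0 (\<lambda>z. cmod (deriv g z) * \<nu> z) (ball 0 1)"
    using assms(2) by (rule sup0_upper)
  then show ?thesis unfolding norm_nu_def by (rule max.coboundedI2)
qed

lemma norm_nu_le:
  assumes "0 \<le> B" "cmod (g 0) \<le> B" "\<And>z. z \<in> ball 0 1 \<Longrightarrow> cmod (deriv g z) * \<nu> z \<le> B"
  shows "norm_nu \<nu> g \<le> B"
  unfolding norm_nu_def using assms by (auto intro!: sup0_least)

definition pointwise_C1_tendsto :: "(nat \<Rightarrow> complex \<Rightarrow> complex) \<Rightarrow> (complex \<Rightarrow> complex) \<Rightarrow> bool" where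
  "pointwise_C1_tendsto gs g \<longleftrightarrow>
     (\<forall>z\<in>ball 0 1. (\<lambda>n. gs n z) \<longlonglongrightarrow> g z \<and> (\<lambda>n. deriv (gs n) z) \<longlonglongrightarrow> deriv g z)"

text \<open>A sample combination (c, [(c_1, w_1), ..., (c_k, w_k)]) encodes the functional
  g |-> c g(0) + sum_j c_j nu(w_j) g'(w_j) on B_nu(D) (comb_apply) and the vector
  c f(0) + sum_j c_j nu(w_j) f(1, w_j) of E (comb_vector); comb_norm is its l1-norm.\<close>

type_synonym sample_comb = "complex \<times> (complex \<times> complex) list"

definition comb_add :: "sample_comb \<Rightarrow> sample_comb \<Rightarrow> sample_comb" where
  "comb_add L M = (fst L + fst M, snd L @ snd M)"

definition comb_scale :: "complex \<Rightarrow> sample_comb \<Rightarrow> sample_comb" where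
  "comb_scale t L = (t * fst L, map (\<lambda>(c, w). (t * c, w)) (snd L))"

fun comb_sum :: "(nat \<Rightarrow> sample_comb) \<Rightarrow> nat \<Rightarrow> sample_comb" where
  "comb_sum f 0 = (0, [])"
| "comb_sum f (Suc n) = comb_add (comb_sum f n) (f n)"

definition comb_norm :: "sample_comb \<Rightarrow> real" where
  "comb_norm L = cmod (fst L) + (\<Sum>(c, w)\<leftarrow>snd L. cmod c)"

definition comb_points :: "sample_comb \<Rightarrow> complex set" where
  "comb_points L = snd ` set (snd L)"

lemma comb_norm_add: "comb_norm (comb_add L M) \<le> comb_norm L + comb_norm M"
  unfolding comb_norm_def comb_add_def by (simp add: norm_triangle_ineq)

lemma comb_norm_scale: "comb_norm (comb_scale t L) = cmod t * comb_norm L"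
proof -
  have "(\<Sum>(c, w)\<leftarrow>map (\<lambda>(c, w). (t * c, w)) xs. cmod c) = cmod t * (\<Sum>(c, w)\<leftarrow>xs. cmod c)"
    for xs :: "(complex \<times> complex) list"
    by (induction xs) (auto simp: norm_mult algebra_simps)
  then show ?thesis unfolding comb_norm_def comb_scale_def by (simp add: norm_mult algebra_simps)
qed

lemma comb_norm_sum: "comb_norm (comb_sum f n) \<le> (\<Sum>j<n. comb_norm (f j))"
proof (induction n)
  case (Suc n)
  then show ?case using comb_norm_add[of "comb_sum f n" "f n"] by simp
qed (simp add: comb_norm_def)

lemma comb_points_add: "comb_points (comb_add L M) = comb_points L \<union> comb_points M"
  unfolding comb_points_def comb_add_def by auto

lemma comb_points_scale: "comb_points (comb_scale t L) = comb_points L"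
  unfolding comb_points_def comb_scale_def by (simp add: image_image case_prod_beta)

lemma comb_points_sum: "comb_points (comb_sum f n) \<subseteq> (\<Union>j<n. comb_points (f j))"
proof (induction n)
  case (Suc n)
  then show ?case by (auto simp: comb_points_add lessThan_Suc)
qed (simp add: comb_points_def)

lemma comb_convex_sum:
  assumes "\<And>j. comb_points (L j) \<subseteq> V" "\<And>j. comb_norm (L j) \<le> K"
    and "\<And>j. j < n \<Longrightarrow> 0 \<le> \<theta> j" "(\<Sum>j<n. \<theta> j) = 1"
  shows "comb_points (comb_sum (\<lambda>j. comb_scale (of_real (\<theta> j)) (L j)) n) \<subseteq> V"
    and "comb_norm (comb_sum (\<lambda>j. comb_scale (of_real (\<theta> j)) (L j)) n) \<le> K"
proof -
  have "comb_points (comb_sum (\<lambda>j. comb_scale (of_real (\<theta> j)) (L j)) n)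
      \<subseteq> (\<Union>j<n. comb_points (comb_scale (of_real (\<theta> j)) (L j)))"
    by (rule comb_points_sum)
  also have "\<dots> \<subseteq> V" using assms(1) by (auto simp: comb_points_scale)
  finally show "comb_points (comb_sum (\<lambda>j. comb_scale (of_real (\<theta> j)) (L j)) n) \<subseteq> V" .
  have "comb_norm (comb_sum (\<lambda>j. comb_scale (of_real (\<theta> j)) (L j)) n)
      \<le> (\<Sum>j<n. comb_norm (comb_scale (of_real (\<theta> j)) (L j)))"
    by (rule comb_norm_sum)
  also have "\<dots> \<le> (\<Sum>j<n. \<theta> j * K)"
  proof (rule sum_mono)
    fix j assume "j \<in> {..<n}"
    then have "0 \<le> \<theta> j" using assms(3) by simp
    then show "comb_norm (comb_scale (of_real (\<theta> j)) (L j)) \<le> \<theta> j * K"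
      using assms(2)[of j] by (simp add: comb_norm_scale mult_left_mono)
  qed
  also have "\<dots> = K" using assms(4) by (simp add: sum_distrib_right[symmetric])
  finally show "comb_norm (comb_sum (\<lambda>j. comb_scale (of_real (\<theta> j)) (L j)) n) \<le> K" .
qed

text \<open>Testing a functional against the four rotations i^k of an atom controls the modulus of its
  value, see norm_le_of_rotations.\<close>

definition rotation_atom :: "real \<Rightarrow> complex option \<Rightarrow> nat \<Rightarrow> sample_comb" where
  "rotation_atom s p k =
     (case p of None \<Rightarrow> (of_real s * \<i> ^ k, []) | Some w \<Rightarrow> (0, [(of_real s * \<i> ^ k, w)]))"

lemma comb_norm_rotation_atom: "0 \<le> s \<Longrightarrow> comb_norm (rotation_atom s p k) = s"
  unfolding rotation_atom_def comb_norm_def by (cases p) (simp_all add: norm_mult norm_power)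

lemma comb_points_rotation_atom: "comb_points (rotation_atom s p k) = set_option p"
  unfolding rotation_atom_def comb_points_def by (cases p) simp_all

locale bloch_weight =
  fixes \<nu> :: "complex \<Rightarrow> real"
  assumes nu_cont: "continuous_on (ball 0 1) \<nu>"
    and nu_pos: "\<And>z. z \<in> ball 0 1 \<Longrightarrow> 0 < \<nu> z"
begin

lemma nu_lower_bound:
  assumes "compact K" "K \<subseteq> ball 0 1"
  obtains m where "m > 0" "\<And>z. z \<in> K \<Longrightarrow> m \<le> \<nu> z"
proof (cases "K = {}")
  case False
  obtain x where "x \<in> K" "\<And>y. y \<in> K \<Longrightarrow> \<nu> x \<le> \<nu> y"
    using continuous_attains_inf[OF assms(1) False continuous_on_subset[OF nu_cont assms(2)]] by blast
  then show ?thesis using that[of "\<nu> x"] assms(2) nu_pos by blast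
qed (use that[of 1] in simp)

lemma deriv_le_of_nu_ge:
  assumes "g \<in> Bnu \<nu>" "z \<in> ball 0 1" "0 < m" "m \<le> \<nu> z"
  shows "cmod (deriv g z) \<le> norm_nu \<nu> g / m"
proof -
  have "cmod (deriv g z) * m \<le> cmod (deriv g z) * \<nu> z" using assms(4) by (simp add: mult_left_mono)
  then show ?thesis using norm_nu_ge_deriv[OF assms(1,2)] assms(3) by (simp add: field_simps)
qed

lemma weighted_deriv_linear_le:
  assumes "g \<in> Bnu \<nu>" "h \<in> Bnu \<nu>" "z \<in> ball 0 1"
  shows "cmod (deriv (\<lambda>w. a * g w + b * h w) z) * \<nu> z \<le> cmod a * norm_nu \<nu> g + cmod b * norm_nu \<nu> h"
proof -
  have "cmod (deriv (\<lambda>w. a * g w + b * h w) z) * \<nu> z = cmod (a * deriv g z + b * deriv h z) * \<nu> z"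
    by (simp add: deriv_linear[OF Bnu_holomorphic[OF assms(1)] Bnu_holomorphic[OF assms(2)] open_ball assms(3)])
  also have "\<dots> \<le> (cmod a * cmod (deriv g z) + cmod b * cmod (deriv h z)) * \<nu> z"
    using nu_pos[OF assms(3)] norm_triangle_ineq[of "a * deriv g z" "b * deriv h z"]
    by (intro mult_right_mono) (auto simp: norm_mult)
  also have "\<dots> = cmod a * (cmod (deriv g z) * \<nu> z) + cmod b * (cmod (deriv h z) * \<nu> z)"
    by (simp add: algebra_simps)
  also have "\<dots> \<le> cmod a * norm_nu \<nu> g + cmod b * norm_nu \<nu> h"
    using norm_nu_ge_deriv[OF assms(1,3)] norm_nu_ge_deriv[OF assms(2,3)]
    by (intro add_mono mult_left_mono) auto
  finally show ?thesis .
qed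

lemma Bnu_linear:
  assumes "g \<in> Bnu \<nu>" "h \<in> Bnu \<nu>"
  shows "(\<lambda>w. a * g w + b * h w) \<in> Bnu \<nu>"
  using assms weighted_deriv_linear_le[OF assms] unfolding Bnu_def
  by (auto intro!: holomorphic_intros bdd_aboveI2)

lemma norm_nu_linear_le:
  assumes "g \<in> Bnu \<nu>" "h \<in> Bnu \<nu>"
  shows "norm_nu \<nu> (\<lambda>w. a * g w + b * h w) \<le> cmod a * norm_nu \<nu> g + cmod b * norm_nu \<nu> h"
proof (rule norm_nu_le)
  show "0 \<le> cmod a * norm_nu \<nu> g + cmod b * norm_nu \<nu> h" by (simp add: norm_nu_nonneg)
  have "cmod (a * g 0 + b * h 0) \<le> cmod a * cmod (g 0) + cmod b * cmod (h 0)"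
    using norm_triangle_ineq[of "a * g 0" "b * h 0"] by (simp add: norm_mult)
  also have "\<dots> \<le> cmod a * norm_nu \<nu> g + cmod b * norm_nu \<nu> h"
    by (intro add_mono mult_left_mono norm_nu_ge_value) auto
  finally show "cmod (a * g 0 + b * h 0) \<le> cmod a * norm_nu \<nu> g + cmod b * norm_nu \<nu> h" .
qed (rule weighted_deriv_linear_le[OF assms])

lemma Bnu_value_bound:
  assumes "\<rho> < 1"
  obtains B where "B > 0" "\<And>g z. g \<in> Bnu \<nu> \<Longrightarrow> z \<in> cball 0 \<rho> \<Longrightarrow> cmod (g z) \<le> B * norm_nu \<nu> g"
proof -
  have sub: "cball 0 \<rho> \<subseteq> ball 0 1" using assms by auto
  obtain m where m: "m > 0" "\<And>z. z \<in> cball 0 \<rho> \<Longrightarrow> m \<le> \<nu> z"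
    using nu_lower_bound[OF compact_cball sub] by blast
  have "cmod (g z) \<le> (1 + 1 / m) * norm_nu \<nu> g" if g: "g \<in> Bnu \<nu>" and z: "z \<in> cball 0 \<rho>" for g z
  proof -
    have "0 \<in> cball 0 \<rho>" using z order_trans[OF norm_ge_zero, of z \<rho>] by simp
    have "cmod (deriv g w) \<le> norm_nu \<nu> g / m" if "w \<in> cball 0 \<rho>" for w
      using subsetD[OF sub that] m(1) m(2)[OF that] by (rule deriv_le_of_nu_ge[OF g])
    then have "cmod (g z - g 0) \<le> norm_nu \<nu> g / m * cmod (z - 0)"
      using z \<open>0 \<in> cball 0 \<rho>\<close>
      by (rule holomorphic_Lipschitz[OF Bnu_holomorphic[OF g] open_ball convex_cball sub])
    also have "\<dots> \<le> norm_nu \<nu> g / m"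
      using subsetD[OF sub z] m(1) norm_nu_nonneg[of \<nu> g] by (intro mult_left_le) auto
    finally show ?thesis
      using norm_nu_ge_value[of g \<nu>] norm_triangle_ineq2[of "g z" "g 0"] by (simp add: field_simps)
  qed
  then show ?thesis using that[of "1 + 1 / m"] m(1) by (simp add: add_pos_pos)
qed

definition Bnu_unit_ball :: "(complex \<Rightarrow> complex) set" where
  "Bnu_unit_ball = {g \<in> Bnu \<nu>. norm_nu \<nu> g \<le> 1}"

lemma Bnu_unit_ball_convex:
  assumes "g \<in> Bnu_unit_ball" "h \<in> Bnu_unit_ball" "0 \<le> t" "t \<le> 1"
  shows "(\<lambda>w. of_real (1 - t) * g w + of_real t * h w) \<in> Bnu_unit_ball"
proof -
  have "norm_nu \<nu> (\<lambda>w. of_real (1 - t) * g w + of_real t * h w)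
      \<le> (1 - t) * norm_nu \<nu> g + t * norm_nu \<nu> h"
    using assms norm_nu_linear_le[of g h "of_real (1 - t)" "of_real t"]
    unfolding Bnu_unit_ball_def by (simp del: of_real_diff)
  also have "\<dots> \<le> (1 - t) * 1 + t * 1"
    using assms unfolding Bnu_unit_ball_def by (intro add_mono mult_left_mono) auto
  finally show ?thesis
    using assms Bnu_linear unfolding Bnu_unit_ball_def by (simp del: of_real_diff)
qed

lemma Bnu_unit_ball_scale:
  assumes "g \<in> Bnu \<nu>" "cmod c * norm_nu \<nu> g \<le> 1"
  shows "(\<lambda>w. c * g w) \<in> Bnu_unit_ball"
  using norm_nu_linear_le[OF assms(1) assms(1), of c 0] Bnu_linear[OF assms(1) assms(1), of c 0] assms(2)
  unfolding Bnu_unit_ball_def by simp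

lemma Bnu_unit_ball_bounded:
  assumes "compact K" "K \<subseteq> ball 0 1"
  shows "\<exists>B. \<forall>h\<in>Bnu_unit_ball. \<forall>z\<in>K. cmod (h z) \<le> B"
proof -
  obtain \<rho> where "\<rho> < 1" "K \<subseteq> cball 0 \<rho>" using compact_subset_ball_imp_cball[OF assms] .
  obtain B where "B > 0" and B: "\<And>g z. g \<in> Bnu \<nu> \<Longrightarrow> z \<in> cball 0 \<rho> \<Longrightarrow> cmod (g z) \<le> B * norm_nu \<nu> g"
    using Bnu_value_bound[OF \<open>\<rho> < 1\<close>] by blast
  have "cmod (h z) \<le> B" if "h \<in> Bnu_unit_ball" "z \<in> K" for h z
  proof -
    have "cmod (h z) \<le> B * norm_nu \<nu> h"
      using that \<open>K \<subseteq> cball 0 \<rho>\<close> B unfolding Bnu_unit_ball_def by blast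
    also have "\<dots> \<le> B"
      using that \<open>B > 0\<close> unfolding Bnu_unit_ball_def by (intro mult_left_le) auto
    finally show ?thesis .
  qed
  then show ?thesis by blast
qed

lemma Bnu_unit_ball_compact:
  fixes gs :: "nat \<Rightarrow> complex \<Rightarrow> complex"
  assumes gs: "\<And>n. gs n \<in> Bnu_unit_ball"
  obtains g r where "g \<in> Bnu_unit_ball" "strict_mono r" "pointwise_C1_tendsto (gs \<circ> r) g"
proof -
  have gs_Bnu: "gs n \<in> Bnu \<nu>" "norm_nu \<nu> (gs n) \<le> 1" for n
    using gs unfolding Bnu_unit_ball_def by auto
  have hol: "\<And>h. h \<in> Bnu_unit_ball \<Longrightarrow> h holomorphic_on ball 0 1"
    unfolding Bnu_unit_ball_def using Bnu_holomorphic by blast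
  obtain g r where g: "g holomorphic_on ball 0 1" "strict_mono r"
      "\<And>z. z \<in> ball 0 1 \<Longrightarrow> (\<lambda>n. gs (r n) z) \<longlonglongrightarrow> g z"
      "\<And>K. compact K \<Longrightarrow> K \<subseteq> ball 0 1 \<Longrightarrow> uniform_limit K (gs \<circ> r) g sequentially"
    using Montel[OF open_ball hol Bnu_unit_ball_bounded, of gs] gs by blast
  have deriv: "(\<lambda>n. deriv (gs (r n)) z) \<longlonglongrightarrow> deriv g z" if "z \<in> ball 0 1" for z
    using deriv_tendsto_of_locally_uniform[OF open_ball _ g(4) that] hol gs by (simp add: o_def)
  have "cmod (gs n 0) \<le> 1" for n
    using norm_nu_ge_value[of "gs n" \<nu>] gs_Bnu(2)[of n] by linarith
  then have "cmod (g 0) \<le> 1"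
    by (intro LIMSEQ_le_const2[OF tendsto_norm[OF g(3)]]) auto
  moreover have "cmod (deriv g z) * \<nu> z \<le> 1" if "z \<in> ball 0 1" for z
  proof -
    have "cmod (deriv (gs n) z) * \<nu> z \<le> 1" for n
      using norm_nu_ge_deriv[OF gs_Bnu(1) that, of n] gs_Bnu(2)[of n] by linarith
    then show ?thesis
      by (intro LIMSEQ_le_const2[OF tendsto_mult_right[OF tendsto_norm[OF deriv[OF that]]]]) auto
  qed
  ultimately have "g \<in> Bnu_unit_ball"
    using g(1) unfolding Bnu_unit_ball_def Bnu_def
    by (auto intro!: bdd_aboveI2[where M=1] norm_nu_le)
  moreover have "pointwise_C1_tendsto (gs \<circ> r) g"
    unfolding pointwise_C1_tendsto_def using g(3) deriv by simp
  ultimately show ?thesis using that g(2) by blast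
qed

text \<open>The functionals phi that the construction realises by vectors x of E, in the sense that
  e(x) = phi(f_e) for all e in G.\<close>

definition admissible :: "((complex \<Rightarrow> complex) \<Rightarrow> complex) \<Rightarrow> real \<Rightarrow> bool" where
  "admissible \<phi> A \<longleftrightarrow> 0 \<le> A \<and>
     (\<forall>g\<in>Bnu \<nu>. \<forall>h\<in>Bnu \<nu>. \<forall>a b. \<phi> (\<lambda>w. a * g w + b * h w) = a * \<phi> g + b * \<phi> h) \<and>
     (\<forall>g\<in>Bnu \<nu>. cmod (\<phi> g) \<le> A * norm_nu \<nu> g) \<and>
     (\<forall>gs g. range gs \<subseteq> Bnu \<nu> \<longrightarrow> g \<in> Bnu \<nu> \<longrightarrow> pointwise_C1_tendsto gs g \<longrightarrow>
        (\<lambda>n. \<phi> (gs n)) \<longlonglongrightarrow> \<phi> g)"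

lemma
  assumes "admissible \<phi> A"
  shows admissible_nonneg: "0 \<le> A"
    and admissible_linear:
      "\<And>g h a b. g \<in> Bnu \<nu> \<Longrightarrow> h \<in> Bnu \<nu> \<Longrightarrow> \<phi> (\<lambda>w. a * g w + b * h w) = a * \<phi> g + b * \<phi> h"
    and admissible_bound: "\<And>g. g \<in> Bnu \<nu> \<Longrightarrow> cmod (\<phi> g) \<le> A * norm_nu \<nu> g"
    and admissible_tendsto:
      "\<And>gs g. (\<And>n. gs n \<in> Bnu \<nu>) \<Longrightarrow> g \<in> Bnu \<nu> \<Longrightarrow> pointwise_C1_tendsto gs g \<Longrightarrow>
        (\<lambda>n. \<phi> (gs n)) \<longlonglongrightarrow> \<phi> g"
  using assms unfolding admissible_def by blast+

lemma admissible_scale: "admissible \<phi> A \<Longrightarrow> g \<in> Bnu \<nu> \<Longrightarrow> \<phi> (\<lambda>w. c * g w) = c * \<phi> g"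
  using admissible_linear[of \<phi> A g g c 0] by simp

lemma admissible_bound_mono:
  assumes "admissible \<phi> A" "0 \<le> D" "\<And>g. g \<in> Bnu \<nu> \<Longrightarrow> cmod (\<phi> g) \<le> D * norm_nu \<nu> g"
  shows "admissible \<phi> D"
  using assms unfolding admissible_def by blast

lemma admissible_eval:
  assumes "z \<in> ball 0 1"
  obtains A where "A > 0" "admissible (\<lambda>g. g z) A"
proof -
  obtain A where "A > 0" and A: "\<And>g w. g \<in> Bnu \<nu> \<Longrightarrow> w \<in> cball 0 (cmod z) \<Longrightarrow> cmod (g w) \<le> A * norm_nu \<nu> g"
    using Bnu_value_bound[of "cmod z"] assms by auto
  have "admissible (\<lambda>g. g z) A"
    unfolding admissible_def pointwise_C1_tendsto_def using \<open>A > 0\<close> A assms by auto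
  then show ?thesis using that \<open>A > 0\<close> by blast
qed

lemma admissible_deriv:
  assumes "z \<in> ball 0 1"
  shows "admissible (\<lambda>g. deriv g z) (1 / \<nu> z)"
proof -
  have "cmod (deriv g z) \<le> 1 / \<nu> z * norm_nu \<nu> g" if "g \<in> Bnu \<nu>" for g
    using norm_nu_ge_deriv[OF that assms] nu_pos[OF assms] by (simp add: field_simps)
  then show ?thesis
    unfolding admissible_def pointwise_C1_tendsto_def
    using assms nu_pos[OF assms] deriv_linear[OF Bnu_holomorphic Bnu_holomorphic open_ball assms]
    by auto
qed

lemma Bnu_difference_quotient_bound:
  assumes "z \<in> ball 0 1"
  shows "\<exists>r>0. \<exists>K>0. cball z r \<subseteq> ball 0 1 \<and> (\<forall>g h. g \<in> Bnu \<nu> \<longrightarrow> h \<noteq> 0 \<longrightarrow> cmod h \<le> r \<longrightarrow>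
       cmod ((g (z + h) - g z) / h - deriv g z) \<le> K * cmod h * norm_nu \<nu> g)"
proof -
  obtain \<delta> where "\<delta> > 0" "cball z \<delta> \<subseteq> ball 0 1"
    using open_contains_cball assms by (metis open_ball)
  define r where "r = \<delta> / 2"
  have "r > 0" and sub: "cball z (2 * r) \<subseteq> ball 0 1"
    using \<open>\<delta> > 0\<close> \<open>cball z \<delta> \<subseteq> ball 0 1\<close> by (auto simp: r_def)
  then have "cball z r \<subseteq> ball 0 1" by (simp add: subset_cball order_trans[OF _ sub])
  obtain m where "m > 0" and m: "\<And>w. w \<in> cball z (2 * r) \<Longrightarrow> m \<le> \<nu> w"
    using nu_lower_bound[OF compact_cball sub] by blast
  have dq: "cmod ((g (z + h) - g z) / h - deriv g z) \<le> 1 / (m * r) * cmod h * norm_nu \<nu> g"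
    if "g \<in> Bnu \<nu>" "h \<noteq> 0" "cmod h \<le> r" for g h
  proof -
    have "cmod (deriv g w) \<le> norm_nu \<nu> g / m" if "w \<in> cball z (2 * r)" for w
      using subsetD[OF sub that] \<open>m > 0\<close> m[OF that] by (rule deriv_le_of_nu_ge[OF \<open>g \<in> Bnu \<nu>\<close>])
    then have "cmod ((g (z + h) - g z) / h - deriv g z) \<le> norm_nu \<nu> g / m / r * cmod h"
      using that(2,3) \<open>r > 0\<close>
      by (intro difference_quotient_bound[OF Bnu_holomorphic[OF that(1)] open_ball sub]) auto
    then show ?thesis by (simp add: field_simps)
  qed
  then have "\<forall>g h. g \<in> Bnu \<nu> \<longrightarrow> h \<noteq> 0 \<longrightarrow> cmod h \<le> r \<longrightarrow>
      cmod ((g (z + h) - g z) / h - deriv g z) \<le> 1 / (m * r) * cmod h * norm_nu \<nu> g"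
    by simp
  then have "\<exists>K>0. cball z r \<subseteq> ball 0 1 \<and> (\<forall>g h. g \<in> Bnu \<nu> \<longrightarrow> h \<noteq> 0 \<longrightarrow> cmod h \<le> r \<longrightarrow>
      cmod ((g (z + h) - g z) / h - deriv g z) \<le> K * cmod h * norm_nu \<nu> g)"
    using \<open>r > 0\<close> \<open>m > 0\<close> \<open>cball z r \<subseteq> ball 0 1\<close> by (intro exI[of _ "1 / (m * r)"]) simp
  then show ?thesis using \<open>r > 0\<close> by (intro exI[of _ r]) simp
qed

lemma admissible_difference_quotient:
  assumes "z \<in> ball 0 1"
  obtains r K where "r > 0" "K > 0"
    "\<And>h. h \<noteq> 0 \<Longrightarrow> cmod h \<le> r \<Longrightarrow>
       z + h \<in> ball 0 1 \<and> admissible (\<lambda>g. (g (z + h) - g z) / h - deriv g z) (K * cmod h)"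
proof -
  obtain r K where "0 < r" "0 < K" "cball z r \<subseteq> ball 0 1"
    and bound: "\<forall>g h. g \<in> Bnu \<nu> \<longrightarrow> h \<noteq> 0 \<longrightarrow> cmod h \<le> r \<longrightarrow>
       cmod ((g (z + h) - g z) / h - deriv g z) \<le> K * cmod h * norm_nu \<nu> g"
    using Bnu_difference_quotient_bound[OF assms] by auto
  have "z + h \<in> ball 0 1 \<and> admissible (\<lambda>g. (g (z + h) - g z) / h - deriv g z) (K * cmod h)"
    if "h \<noteq> 0" "cmod h \<le> r" for h
  proof
    have "z + h \<in> cball z r" using that by (simp add: dist_norm)
    then show zh: "z + h \<in> ball 0 1" using \<open>cball z r \<subseteq> ball 0 1\<close> by blast
    have "deriv (\<lambda>w. a * g w + b * g' w) z = a * deriv g z + b * deriv g' z"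
      if "g \<in> Bnu \<nu>" "g' \<in> Bnu \<nu>" for g g' a b
      using deriv_linear[OF Bnu_holomorphic[OF that(1)] Bnu_holomorphic[OF that(2)] open_ball assms] .
    moreover have "(\<lambda>n. (gs n (z + h) - gs n z) / h - deriv (gs n) z)
        \<longlonglongrightarrow> (g (z + h) - g z) / h - deriv g z" if "pointwise_C1_tendsto gs g" for gs g
      using that zh assms \<open>h \<noteq> 0\<close> unfolding pointwise_C1_tendsto_def
      by (intro tendsto_intros) auto
    ultimately show "admissible (\<lambda>g. (g (z + h) - g z) / h - deriv g z) (K * cmod h)"
      unfolding admissible_def using bound that \<open>0 < K\<close>
      by (auto simp: field_simps)
  qed
  then show ?thesis by (rule that[OF \<open>0 < r\<close> \<open>0 < K\<close>])
qed

definition comb_apply :: "sample_comb \<Rightarrow> (complex \<Rightarrow> complex) \<Rightarrow> complex" where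
  "comb_apply L g = fst L * g 0 + (\<Sum>(c, w)\<leftarrow>snd L. c * of_real (\<nu> w) * deriv g w)"

lemma comb_apply_add: "comb_apply (comb_add L M) g = comb_apply L g + comb_apply M g"
  unfolding comb_apply_def comb_add_def by (simp add: algebra_simps)

lemma comb_apply_scale: "comb_apply (comb_scale t L) g = t * comb_apply L g"
proof -
  have "(\<Sum>(c, w)\<leftarrow>map (\<lambda>(c, w). (t * c, w)) xs. c * of_real (\<nu> w) * deriv g w)
      = t * (\<Sum>(c, w)\<leftarrow>xs. c * of_real (\<nu> w) * deriv g w)" for xs :: "(complex \<times> complex) list"
    by (induction xs) (auto simp: algebra_simps)
  then show ?thesis unfolding comb_apply_def comb_scale_def by (simp add: algebra_simps)
qed

lemma comb_apply_sum: "comb_apply (comb_sum f n) g = (\<Sum>j<n. comb_apply (f j) g)"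
proof (induction n)
  case (Suc n)
  then show ?case by (simp add: comb_apply_add)
qed (simp add: comb_apply_def)

lemma admissible_cmult:
  assumes "admissible \<phi> A"
  shows "admissible (\<lambda>g. c * \<phi> g) (cmod c * A)"
  unfolding admissible_def
proof (intro conjI ballI allI impI)
  show "0 \<le> cmod c * A" using admissible_nonneg[OF assms] by simp
  fix g h a b assume "g \<in> Bnu \<nu>" "h \<in> Bnu \<nu>"
  then show "c * \<phi> (\<lambda>w. a * g w + b * h w) = a * (c * \<phi> g) + b * (c * \<phi> h)"
    using admissible_linear[OF assms] by (simp add: algebra_simps)
next
  fix g assume "g \<in> Bnu \<nu>"
  then show "cmod (c * \<phi> g) \<le> cmod c * A * norm_nu \<nu> g"
    using admissible_bound[OF assms] by (simp add: norm_mult mult.assoc mult_left_mono)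
next
  fix gs g assume "range gs \<subseteq> Bnu \<nu>" "g \<in> Bnu \<nu>" "pointwise_C1_tendsto gs g"
  then show "(\<lambda>n. c * \<phi> (gs n)) \<longlonglongrightarrow> c * \<phi> g"
    by (intro tendsto_mult_left admissible_tendsto[OF assms]) auto
qed

lemma admissible_add:
  assumes "admissible \<phi> A" "admissible \<psi> B"
  shows "admissible (\<lambda>g. \<phi> g + \<psi> g) (A + B)"
  unfolding admissible_def
proof (intro conjI ballI allI impI)
  show "0 \<le> A + B" using admissible_nonneg[OF assms(1)] admissible_nonneg[OF assms(2)] by simp
  fix g h a b assume "g \<in> Bnu \<nu>" "h \<in> Bnu \<nu>"
  then show "\<phi> (\<lambda>w. a * g w + b * h w) + \<psi> (\<lambda>w. a * g w + b * h w) = a * (\<phi> g + \<psi> g) + b * (\<phi> h + \<psi> h)"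
    using admissible_linear[OF assms(1)] admissible_linear[OF assms(2)] by (simp add: algebra_simps)
next
  fix g assume "g \<in> Bnu \<nu>"
  then show "cmod (\<phi> g + \<psi> g) \<le> (A + B) * norm_nu \<nu> g"
    using admissible_bound[OF assms(1)] admissible_bound[OF assms(2)] norm_triangle_ineq[of "\<phi> g" "\<psi> g"]
    by (simp add: distrib_right add_mono order_trans)
next
  fix gs g assume "range gs \<subseteq> Bnu \<nu>" "g \<in> Bnu \<nu>" "pointwise_C1_tendsto gs g"
  then show "(\<lambda>n. \<phi> (gs n) + \<psi> (gs n)) \<longlonglongrightarrow> \<phi> g + \<psi> g"
    by (intro tendsto_add admissible_tendsto[OF assms(1)] admissible_tendsto[OF assms(2)]) auto
qed

lemma admissible_diff:
  assumes "admissible \<phi> A" "admissible \<psi> B"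
  shows "admissible (\<lambda>g. \<phi> g - \<psi> g) (A + B)"
  using admissible_add[OF assms(1) admissible_cmult[OF assms(2), of "-1"]] by simp

lemma admissible_comb_apply:
  assumes "comb_points L \<subseteq> ball 0 1"
  shows "admissible (comb_apply L) (comb_norm L)"
proof -
  obtain c xs where L: "L = (c, xs)" by (cases L)
  have "admissible (\<lambda>g. (\<Sum>(c, w)\<leftarrow>xs. c * of_real (\<nu> w) * deriv g w)) (\<Sum>(c, w)\<leftarrow>xs. cmod c)"
    if "snd ` set xs \<subseteq> ball 0 1" for xs
    using that
  proof (induction xs)
    case Nil
    then show ?case unfolding admissible_def by simp
  next
    case (Cons cw xs)
    obtain c w where cw: "cw = (c, w)" by (cases cw)
    then have "w \<in> ball 0 1" using Cons.prems by auto
    then have "admissible (\<lambda>g. (c * of_real (\<nu> w)) * deriv g w) (cmod (c * of_real (\<nu> w)) * (1 / \<nu> w))"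
      by (intro admissible_cmult admissible_deriv)
    moreover have "cmod (c * of_real (\<nu> w)) * (1 / \<nu> w) = cmod c"
      using nu_pos[OF \<open>w \<in> ball 0 1\<close>] by (simp add: norm_mult)
    ultimately show ?case
      using admissible_add[OF _ Cons.IH] Cons.prems cw by (auto simp: mult.assoc)
  qed
  moreover have "admissible (\<lambda>g. c * g 0) (cmod c * 1)"
    by (intro admissible_cmult) (auto simp: admissible_def pointwise_C1_tendsto_def norm_nu_ge_value)
  ultimately show ?thesis
    using admissible_add assms L unfolding comb_apply_def comb_norm_def comb_points_def by fastforce
qed

lemma zero_in_Bnu_unit_ball: "(\<lambda>_. 0) \<in> Bnu_unit_ball"
  unfolding Bnu_unit_ball_def Bnu_def by (auto intro: norm_nu_le)

lemma unit_ball_attains_min: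
  fixes d :: "(complex \<Rightarrow> complex) \<Rightarrow> real"
  assumes "bdd_below (d ` Bnu_unit_ball)"
    and cont: "\<And>gs g. (\<And>n. gs n \<in> Bnu_unit_ball) \<Longrightarrow> g \<in> Bnu_unit_ball \<Longrightarrow>
      pointwise_C1_tendsto gs g \<Longrightarrow> (\<lambda>n. d (gs n)) \<longlonglongrightarrow> d g"
  obtains g where "g \<in> Bnu_unit_ball" "\<And>h. h \<in> Bnu_unit_ball \<Longrightarrow> d g \<le> d h"
proof -
  define m where "m = Inf (d ` Bnu_unit_ball)"
  have "\<exists>g\<in>Bnu_unit_ball. d g < m + 1 / (real k + 1)" for k
    using cInf_lessD[of "d ` Bnu_unit_ball" "m + 1 / (real k + 1)"] zero_in_Bnu_unit_ball
    unfolding m_def by fastforce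
  then obtain gs where gs: "\<And>k. gs k \<in> Bnu_unit_ball" "\<And>k. d (gs k) < m + 1 / (real k + 1)"
    by metis
  obtain g r where g: "g \<in> Bnu_unit_ball" "strict_mono r" "pointwise_C1_tendsto (gs \<circ> r) g"
    by (rule Bnu_unit_ball_compact[OF gs(1)])
  have "d (gs (r k)) \<le> m + 1 / (real k + 1)" for k
  proof -
    have "1 / (real (r k) + 1) \<le> 1 / (real k + 1)"
      using seq_suble[OF g(2), of k] by (intro divide_left_mono) auto
    then show ?thesis using gs(2)[of "r k"] by simp
  qed
  moreover have "(\<lambda>k. m + 1 / (real k + 1)) \<longlonglongrightarrow> m"
    using tendsto_add[OF tendsto_const LIMSEQ_inverse_real_of_nat]
    by (simp add: inverse_eq_divide add.commute)
  ultimately have "d g \<le> m"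
    using cont[of "gs \<circ> r"] gs(1) g by (intro LIMSEQ_le[of "\<lambda>k. d ((gs \<circ> r) k)"]) auto
  then show ?thesis
    using that[OF g(1)] cInf_lower[OF _ assms(1)] unfolding m_def by fastforce
qed

lemma unit_ball_common_point:
  fixes y :: "nat \<Rightarrow> (complex \<Rightarrow> complex) \<Rightarrow> real"
  assumes "\<And>n. \<exists>g\<in>Bnu_unit_ball. \<forall>j<n. \<epsilon> \<le> y j g"
    and cont: "\<And>j gs g. (\<And>k. gs k \<in> Bnu_unit_ball) \<Longrightarrow> g \<in> Bnu_unit_ball \<Longrightarrow>
      pointwise_C1_tendsto gs g \<Longrightarrow> (\<lambda>k. y j (gs k)) \<longlonglongrightarrow> y j g"
  obtains g where "g \<in> Bnu_unit_ball" "\<And>j. \<epsilon> \<le> y j g"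
proof -
  obtain gs where gs: "\<And>n. gs n \<in> Bnu_unit_ball" "\<And>n j. j < n \<Longrightarrow> \<epsilon> \<le> y j (gs n)"
    using assms(1) by metis
  obtain g r where g: "g \<in> Bnu_unit_ball" "strict_mono r" "pointwise_C1_tendsto (gs \<circ> r) g"
    by (rule Bnu_unit_ball_compact[OF gs(1)])
  have "\<epsilon> \<le> y j g" for j
  proof (rule LIMSEQ_le_const[OF cont[of "gs \<circ> r"]])
    have "\<epsilon> \<le> y j ((gs \<circ> r) k)" if "k \<ge> Suc j" for k
      using gs(2)[of j "r k"] seq_suble[OF g(2), of k] that by simp
    then show "\<exists>N. \<forall>k\<ge>N. \<epsilon> \<le> y j ((gs \<circ> r) k)" by blast
  qed (use gs(1) g in auto)
  then show ?thesis using that g(1) by blast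
qed

lemma deficit_variational:
  fixes y :: "nat \<Rightarrow> (complex \<Rightarrow> complex) \<Rightarrow> real"
  assumes affine: "\<And>j g h t. j < n \<Longrightarrow> g \<in> Bnu_unit_ball \<Longrightarrow> h \<in> Bnu_unit_ball \<Longrightarrow> 0 \<le> t \<Longrightarrow> t \<le> 1 \<Longrightarrow>
      y j (\<lambda>w. of_real (1 - t) * g w + of_real t * h w) = (1 - t) * y j g + t * y j h"
    and g: "g \<in> Bnu_unit_ball" and h: "h \<in> Bnu_unit_ball"
    and min: "\<And>h. h \<in> Bnu_unit_ball \<Longrightarrow>
      (\<Sum>j<n. (max 0 (\<epsilon> - y j g))\<^sup>2) \<le> (\<Sum>j<n. (max 0 (\<epsilon> - y j h))\<^sup>2)"
  shows "(\<Sum>j<n. max 0 (\<epsilon> - y j g) * y j h) \<le> (\<Sum>j<n. max 0 (\<epsilon> - y j g) * y j g)"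
proof -
  define \<mu> where "\<mu> j = max 0 (\<epsilon> - y j g)" for j
  have "(\<Sum>j<n. \<mu> j * (y j h - y j g)) \<le> 0"
  proof (rule sum_sq_first_order)
    fix t :: real assume "0 < t" "t \<le> 1"
    define gt where "gt w = of_real (1 - t) * g w + of_real t * h w" for w
    have "gt \<in> Bnu_unit_ball"
      unfolding gt_def using Bnu_unit_ball_convex[OF g h] \<open>0 < t\<close> \<open>t \<le> 1\<close> by simp
    have "(max 0 (\<epsilon> - y j gt))\<^sup>2 \<le> (\<mu> j - t * (y j h - y j g))\<^sup>2" if "j < n" for j
    proof -
      have "\<epsilon> - y j gt = (\<epsilon> - y j g) - t * (y j h - y j g)"
        using affine[OF that g h] \<open>0 < t\<close> \<open>t \<le> 1\<close> unfolding gt_def by (simp add: algebra_simps)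
      then show ?thesis unfolding \<mu>_def by (simp only: max0_diff_sq_le)
    qed
    then have "(\<Sum>j<n. (max 0 (\<epsilon> - y j gt))\<^sup>2) \<le> (\<Sum>j<n. (\<mu> j - t * (y j h - y j g))\<^sup>2)"
      by (intro sum_mono) auto
    then show "(\<Sum>j<n. (\<mu> j)\<^sup>2) \<le> (\<Sum>j<n. (\<mu> j - t * (y j h - y j g))\<^sup>2)"
      using min[OF \<open>gt \<in> Bnu_unit_ball\<close>] unfolding \<mu>_def by linarith
  qed
  then show ?thesis unfolding \<mu>_def by (simp add: algebra_simps sum_subtractf)
qed

text \<open>A minimax theorem on the compact convex unit ball: minimise the squared deficit
  sum_j (max 0 (eps - y_j g))^2; at a minimiser the normalised deficits are weights violating mixed.\<close>

lemma unit_ball_minimax: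
  fixes y :: "nat \<Rightarrow> (complex \<Rightarrow> complex) \<Rightarrow> real"
  assumes affine: "\<And>j g h t. j < n \<Longrightarrow> g \<in> Bnu_unit_ball \<Longrightarrow> h \<in> Bnu_unit_ball \<Longrightarrow> 0 \<le> t \<Longrightarrow> t \<le> 1 \<Longrightarrow>
      y j (\<lambda>w. of_real (1 - t) * g w + of_real t * h w) = (1 - t) * y j g + t * y j h"
    and cont: "\<And>j gs g. j < n \<Longrightarrow> (\<And>k. gs k \<in> Bnu_unit_ball) \<Longrightarrow> g \<in> Bnu_unit_ball \<Longrightarrow>
      pointwise_C1_tendsto gs g \<Longrightarrow> (\<lambda>k. y j (gs k)) \<longlonglongrightarrow> y j g"
    and mixed: "\<And>\<theta>. (\<And>j. j < n \<Longrightarrow> 0 \<le> \<theta> j) \<Longrightarrow> (\<Sum>j<n. \<theta> j) = 1 \<Longrightarrow>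
      \<exists>g\<in>Bnu_unit_ball. \<epsilon> < (\<Sum>j<n. \<theta> j * y j g)"
  shows "\<exists>g\<in>Bnu_unit_ball. \<forall>j<n. \<epsilon> \<le> y j g"
proof -
  define d where "d g = (\<Sum>j<n. (max 0 (\<epsilon> - y j g))\<^sup>2)" for g
  obtain g where g: "g \<in> Bnu_unit_ball" and min: "\<And>h. h \<in> Bnu_unit_ball \<Longrightarrow> d g \<le> d h"
  proof (rule unit_ball_attains_min)
    show "bdd_below (d ` Bnu_unit_ball)"
      unfolding d_def by (intro bdd_belowI2[of _ 0] sum_nonneg) auto
    show "(\<lambda>k. d (gs k)) \<longlonglongrightarrow> d g"
      if "\<And>k. gs k \<in> Bnu_unit_ball" "g \<in> Bnu_unit_ball" "pointwise_C1_tendsto gs g" for gs g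
      unfolding d_def using that by (intro tendsto_intros cont) auto
  qed blast
  define \<mu> where "\<mu> j = max 0 (\<epsilon> - y j g)" for j
  define S where "S = (\<Sum>j<n. \<mu> j)"
  show ?thesis
  proof (rule ccontr)
    assume "\<not> ?thesis"
    then obtain j0 where "j0 < n" "\<mu> j0 > 0" using g unfolding \<mu>_def by (auto simp: not_le)
    then have "S > 0"
      unfolding S_def using member_le_sum[of j0 "{..<n}" \<mu>] by (simp add: \<mu>_def)
    obtain h where "h \<in> Bnu_unit_ball" and h: "\<epsilon> < (\<Sum>j<n. \<mu> j / S * y j h)"
      using mixed[of "\<lambda>j. \<mu> j / S"] \<open>S > 0\<close>
      by (auto simp: \<mu>_def S_def sum_divide_distrib[symmetric])
    have "(\<Sum>j<n. \<mu> j * y j h) \<le> (\<Sum>j<n. \<mu> j * y j g)"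
      unfolding \<mu>_def using min unfolding d_def
      by (intro deficit_variational[OF affine g \<open>h \<in> Bnu_unit_ball\<close>]) auto
    also have "\<dots> = \<epsilon> * S - (\<Sum>j<n. (\<mu> j)\<^sup>2)"
    proof -
      have "\<mu> j * y j g = \<mu> j * \<epsilon> - (\<mu> j)\<^sup>2" for j
        unfolding \<mu>_def by (cases "\<epsilon> - y j g \<le> 0") (auto simp: power2_eq_square algebra_simps)
      then show ?thesis
        unfolding S_def by (simp add: sum_subtractf sum_distrib_left mult.commute)
    qed
    also have "\<dots> \<le> \<epsilon> * S" by (simp add: sum_nonneg)
    finally have "(\<Sum>j<n. \<mu> j / S * y j h) \<le> \<epsilon>"
      using \<open>S > 0\<close> by (simp add: sum_divide_distrib[symmetric] divide_le_eq)
    then show False using h by simp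
  qed
qed

lemma comb_apply_rotation_atom:
  "comb_apply (rotation_atom s None k) g = \<i> ^ k * (of_real s * g 0)"
  "comb_apply (rotation_atom s (Some w) k) g = \<i> ^ k * (of_real s * (of_real (\<nu> w) * deriv g w))"
  unfolding rotation_atom_def comb_apply_def by simp_all

lemma admissible_unit_ball_witness:
  assumes "admissible \<psi> A" "g \<in> Bnu \<nu>" "\<epsilon> * norm_nu \<nu> g < cmod (\<psi> g)" "0 \<le> \<epsilon>"
  obtains h where "h \<in> Bnu_unit_ball" "\<epsilon> < Re (\<psi> h)"
proof -
  define N where "N = norm_nu \<nu> g"
  have "N > 0"
  proof (rule ccontr)
    assume "\<not> N > 0"
    then have "N = 0" using norm_nu_nonneg[of \<nu> g] by (simp add: N_def)
    then show False using admissible_bound[OF assms(1,2)] assms(3) by (simp add: N_def)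
  qed
  define c where "c = cnj (\<psi> g) / of_real (cmod (\<psi> g) * N)"
  have "0 \<le> \<epsilon> * N" using assms(4) \<open>N > 0\<close> by simp
  then have "\<psi> g \<noteq> 0" using assms(3) by (auto simp: N_def)
  have "(\<lambda>w. c * g w) \<in> Bnu_unit_ball"
    using \<open>\<psi> g \<noteq> 0\<close> \<open>N > 0\<close>
    by (intro Bnu_unit_ball_scale assms(2)) (simp add: c_def norm_divide N_def del: of_real_mult)
  moreover have "\<psi> (\<lambda>w. c * g w) = of_real (cmod (\<psi> g) / N)"
  proof -
    have "\<psi> (\<lambda>w. c * g w) = c * \<psi> g" by (rule admissible_scale[OF assms(1,2)])
    also have "\<dots> = \<psi> g * cnj (\<psi> g) / of_real (cmod (\<psi> g) * N)"
      by (simp add: c_def)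
    also have "\<dots> = of_real ((cmod (\<psi> g))\<^sup>2) / of_real (cmod (\<psi> g) * N)"
      by (simp only: complex_norm_square)
    also have "\<dots> = of_real (cmod (\<psi> g) / N)"
      using \<open>\<psi> g \<noteq> 0\<close> by (simp only: of_real_divide[symmetric]) (simp add: power2_eq_square)
    finally show ?thesis .
  qed
  moreover have "\<epsilon> < cmod (\<psi> g) / N" using assms(3) \<open>N > 0\<close> by (simp add: N_def field_simps)
  ultimately show ?thesis using that[of "\<lambda>w. c * g w"] by simp
qed

lemma approximation_failure_witness:
  assumes "admissible \<phi> A" "0 \<le> \<epsilon>" "comb_points L \<subseteq> ball 0 1"
    and "\<not> (\<forall>g\<in>Bnu \<nu>. cmod (\<phi> g - comb_apply L g) \<le> \<epsilon> * norm_nu \<nu> g)"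
  obtains h where "h \<in> Bnu_unit_ball" "\<epsilon> < Re (\<phi> h - comb_apply L h)"
proof -
  obtain g where "g \<in> Bnu \<nu>" "\<epsilon> * norm_nu \<nu> g < cmod (\<phi> g - comb_apply L g)"
    using assms(4) by (auto simp: not_le)
  then show ?thesis
    using admissible_unit_ball_witness[OF admissible_diff[OF assms(1) admissible_comb_apply[OF assms(3)]]]
      assms(2) that by blast
qed

lemma comb_apply_convex_comb:
  assumes "(\<Sum>j<n. \<theta> j) = 1"
  shows "\<phi> g - comb_apply (comb_sum (\<lambda>j. comb_scale (of_real (\<theta> j)) (L j)) n) g
    = (\<Sum>j<n. of_real (\<theta> j) * (\<phi> g - comb_apply (L j) g))"
proof -
  have "\<phi> g = (\<Sum>j<n. of_real (\<theta> j) * \<phi> g)"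
    using assms by (simp add: sum_distrib_right[symmetric] of_real_sum[symmetric])
  then show ?thesis
    by (simp add: comb_apply_sum comb_apply_scale algebra_simps sum_subtractf)
qed

lemma Re_deficit_tendsto:
  assumes "admissible \<phi> A" "comb_points L \<subseteq> ball 0 1"
    and "\<And>k. gs k \<in> Bnu_unit_ball" "g \<in> Bnu_unit_ball" "pointwise_C1_tendsto gs g"
  shows "(\<lambda>k. Re (\<phi> (gs k) - comb_apply L (gs k))) \<longlonglongrightarrow> Re (\<phi> g - comb_apply L g)"
  using admissible_tendsto[OF admissible_diff[OF assms(1) admissible_comb_apply[OF assms(2)]]] assms(3-5)
  unfolding Bnu_unit_ball_def by (intro tendsto_Re) auto

lemma unit_ball_minimax_atoms:
  fixes L :: "nat \<Rightarrow> sample_comb"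
  assumes "admissible \<phi> A" "0 \<le> \<epsilon>" "V \<subseteq> ball 0 1"
    and atoms: "\<And>j. comb_points (L j) \<subseteq> V" "\<And>j. comb_norm (L j) \<le> K"
    and no_approx: "\<And>L'. comb_points L' \<subseteq> V \<Longrightarrow> comb_norm L' \<le> K \<Longrightarrow>
      \<not> (\<forall>g\<in>Bnu \<nu>. cmod (\<phi> g - comb_apply L' g) \<le> \<epsilon> * norm_nu \<nu> g)"
  shows "\<exists>g\<in>Bnu_unit_ball. \<forall>j<n. \<epsilon> \<le> Re (\<phi> g - comb_apply (L j) g)"
proof -
  have L_ball: "comb_points (L j) \<subseteq> ball 0 1" for j using atoms(1) assms(3) by blast
  show ?thesis
  proof (rule unit_ball_minimax)
    fix j g h and t :: real assume "g \<in> Bnu_unit_ball" "h \<in> Bnu_unit_ball"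
    then show "Re (\<phi> (\<lambda>w. of_real (1 - t) * g w + of_real t * h w)
          - comb_apply (L j) (\<lambda>w. of_real (1 - t) * g w + of_real t * h w))
        = (1 - t) * Re (\<phi> g - comb_apply (L j) g) + t * Re (\<phi> h - comb_apply (L j) h)"
      using admissible_linear[OF admissible_diff[OF assms(1) admissible_comb_apply[OF L_ball]]]
      unfolding Bnu_unit_ball_def by (simp del: of_real_diff)
  next
    fix j gs g assume "\<And>k. gs k \<in> Bnu_unit_ball" "g \<in> Bnu_unit_ball" "pointwise_C1_tendsto gs g"
    then show "(\<lambda>k. Re (\<phi> (gs k) - comb_apply (L j) (gs k))) \<longlonglongrightarrow> Re (\<phi> g - comb_apply (L j) g)"
      by (rule Re_deficit_tendsto[OF assms(1) L_ball])
  next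
    fix \<theta> :: "nat \<Rightarrow> real" assume \<theta>: "\<And>j. j < n \<Longrightarrow> 0 \<le> \<theta> j" "(\<Sum>j<n. \<theta> j) = 1"
    note convex = comb_convex_sum[where L = L and V = V and K = K, OF atoms \<theta>]
    have "\<exists>h\<in>Bnu_unit_ball.
        \<epsilon> < Re (\<phi> h - comb_apply (comb_sum (\<lambda>j. comb_scale (of_real (\<theta> j)) (L j)) n) h)"
      by (rule approximation_failure_witness[OF assms(1,2) order_trans[OF convex(1) assms(3)]
          no_approx[OF convex]]) auto
    then show "\<exists>g\<in>Bnu_unit_ball. \<epsilon> < (\<Sum>j<n. \<theta> j * Re (\<phi> g - comb_apply (L j) g))"
      using \<theta>(2) by (auto simp: comb_apply_convex_comb Re_sum)
  qed
qed

end

locale bloch_sampling = bloch_weight +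
  fixes U :: "complex set" and C :: real
  assumes U_sub: "U \<subseteq> ball 0 1" and C_pos: "0 < C"
    and sampling: "\<forall>g\<in>Bnu \<nu>. norm_nu \<nu> g \<le> C * max (cmod (g 0)) (sup0 (\<lambda>z. cmod (deriv g z) * \<nu> z) U)"
begin

lemma norm_nu_le_of_dense_samples:
  assumes "g \<in> Bnu \<nu>" "U \<subseteq> closure T" "cmod (g 0) \<le> R"
    and "\<And>w. w \<in> T \<Longrightarrow> cmod (deriv g w) * \<nu> w \<le> R"
  shows "norm_nu \<nu> g \<le> C * R"
proof -
  have "deriv g holomorphic_on ball 0 1"
    using Bnu_holomorphic[OF assms(1)] by (rule holomorphic_deriv) simp
  then have cont: "continuous_on (ball 0 1) (\<lambda>w. cmod (deriv g w) * \<nu> w)"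
    by (intro continuous_intros nu_cont holomorphic_on_imp_continuous_on)
  have "cmod (deriv g w) * \<nu> w \<le> R" if "w \<in> U" for w
    using cont open_ball subsetD[OF U_sub that] subsetD[OF assms(2) that] assms(4)
    by (rule continuous_le_at_closure_point)
  then have "sup0 (\<lambda>z. cmod (deriv g z) * \<nu> z) U \<le> R"
    using order_trans[OF norm_ge_zero assms(3)] by (intro sup0_least) auto
  then have "max (cmod (g 0)) (sup0 (\<lambda>z. cmod (deriv g z) * \<nu> z) U) \<le> R"
    using assms(3) by simp
  then have "C * max (cmod (g 0)) (sup0 (\<lambda>z. cmod (deriv g z) * \<nu> z) U) \<le> C * R"
    using C_pos by (intro mult_left_mono) auto
  moreover have "norm_nu \<nu> g \<le> C * max (cmod (g 0)) (sup0 (\<lambda>z. cmod (deriv g z) * \<nu> z) U)"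
    using sampling assms(1) by blast
  ultimately show ?thesis by linarith
qed

lemma rotation_atoms_not_dominated:
  assumes "admissible \<phi> A" "0 < A" "0 < \<epsilon>" "g \<in> Bnu \<nu>" "T \<subseteq> U" "U \<subseteq> closure T"
    and dominated: "\<And>p k. p \<in> insert None (Some ` T) \<Longrightarrow> k < 4 \<Longrightarrow>
      \<epsilon> \<le> Re (\<phi> g - comb_apply (rotation_atom (2 * C * A) p k) g)"
  shows False
proof -
  define R where "R = (Re (\<phi> g) - \<epsilon>) / (C * A)"
  have CA: "0 < C * A" using C_pos assms(2) by simp
  have rotated: "cmod z \<le> R"
    if "\<And>k. k < 4 \<Longrightarrow> \<epsilon> \<le> Re (\<phi> g - \<i> ^ k * (of_real (2 * C * A) * z))" for z
  proof -
    have "2 * (C * A) * cmod z \<le> 2 * (Re (\<phi> g) - \<epsilon>)"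
      using norm_le_of_rotations[of "of_real (2 * C * A) * z" "Re (\<phi> g) - \<epsilon>"] that C_pos assms(2)
      by (simp add: norm_mult algebra_simps)
    then show ?thesis using CA by (simp add: R_def field_simps)
  qed
  have "cmod (g 0) \<le> R"
    using dominated[of None] by (intro rotated) (simp add: comb_apply_rotation_atom)
  moreover have "cmod (deriv g w) * \<nu> w \<le> R" if "w \<in> T" for w
  proof -
    have "cmod (of_real (\<nu> w) * deriv g w) \<le> R"
      using dominated[of "Some w"] that by (intro rotated) (simp add: comb_apply_rotation_atom)
    moreover have "0 < \<nu> w" using that assms(5) U_sub nu_pos by blast
    ultimately show ?thesis by (simp add: norm_mult mult.commute)
  qed
  ultimately have "norm_nu \<nu> g \<le> C * R"
    by (rule norm_nu_le_of_dense_samples[OF assms(4,6)])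
  then have "A * norm_nu \<nu> g \<le> A * (C * R)" using assms(2) by simp
  also have "A * (C * R) = Re (\<phi> g) - \<epsilon>" using C_pos assms(2) by (simp add: R_def)
  also have "\<dots> \<le> A * norm_nu \<nu> g - \<epsilon>"
    using complex_Re_le_cmod[of "\<phi> g"] admissible_bound[OF assms(1,4)] by simp
  finally show False using assms(3) by simp
qed

text \<open>This replaces the Hahn-Banach theorem.  If no combination of norm at most 2 C A worked,
  minimax and compactness would give g in the unit ball with Re (phi g) at least eps above every
  rotated atom at 0 and at a countable dense subset of U; the sampling inequality then yields
  A * norm_nu g <= Re (phi g) - eps <= A * norm_nu g - eps.\<close>

lemma admissible_approximation:
  assumes "admissible \<phi> A" "0 < \<epsilon>"
  shows "\<exists>L. comb_points L \<subseteq> U \<and> comb_norm L \<le> 2 * C * A \<and>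
    (\<forall>g\<in>Bnu \<nu>. cmod (\<phi> g - comb_apply L g) \<le> \<epsilon> * norm_nu \<nu> g)"
proof (cases "A = 0")
  case True
  have "cmod (\<phi> g - comb_apply (0, []) g) \<le> \<epsilon> * norm_nu \<nu> g" if "g \<in> Bnu \<nu>" for g
    using admissible_bound[OF assms(1) that] True assms(2) norm_nu_nonneg[of \<nu> g]
    by (simp add: comb_apply_def)
  then show ?thesis using True by (intro exI[of _ "(0, [])"]) (simp add: comb_points_def comb_norm_def)
next
  case False
  then have "0 < A" using admissible_nonneg[OF assms(1)] by simp
  obtain T where T: "countable T" "T \<subseteq> U" "U \<subseteq> closure T" by (rule separable)
  define I where "I = insert None (Some ` T) \<times> {..<4::nat}"
  have "countable I" using T(1) by (simp add: I_def)
  have "(None, 0) \<in> I" by (simp add: I_def)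
  then have "I \<noteq> {}" by blast
  define L where "L j = rotation_atom (2 * C * A) (fst (from_nat_into I j)) (snd (from_nat_into I j))" for j
  have L_points: "comb_points (L j) \<subseteq> U" for j
    using from_nat_into[OF \<open>I \<noteq> {}\<close>, of j] T(2)
    by (auto simp: L_def I_def comb_points_rotation_atom)
  have L_norm: "comb_norm (L j) = 2 * C * A" for j
    using C_pos \<open>0 < A\<close> by (simp add: L_def comb_norm_rotation_atom)
  show ?thesis
  proof (rule ccontr)
    assume none: "\<not> ?thesis"
    have no_approx: "\<And>L'. comb_points L' \<subseteq> U \<Longrightarrow> comb_norm L' \<le> 2 * C * A \<Longrightarrow>
        \<not> (\<forall>g\<in>Bnu \<nu>. cmod (\<phi> g - comb_apply L' g) \<le> \<epsilon> * norm_nu \<nu> g)"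
      using none by blast
    have "comb_norm (L j) \<le> 2 * C * A" for j by (simp add: L_norm)
    then have finite_stage: "\<exists>g\<in>Bnu_unit_ball. \<forall>j<n. \<epsilon> \<le> Re (\<phi> g - comb_apply (L j) g)" for n
      by (rule unit_ball_minimax_atoms[OF assms(1) less_imp_le[OF assms(2)] U_sub L_points _ no_approx])
    have L_ball: "comb_points (L j) \<subseteq> ball 0 1" for j using L_points U_sub by blast
    obtain g where g: "g \<in> Bnu_unit_ball" "\<And>j. \<epsilon> \<le> Re (\<phi> g - comb_apply (L j) g)"
      using unit_ball_common_point[where y = "\<lambda>j g. Re (\<phi> g - comb_apply (L j) g)",
          OF finite_stage Re_deficit_tendsto[OF assms(1) L_ball]] by blast
    show False
    proof (rule rotation_atoms_not_dominated[OF assms(1) \<open>0 < A\<close> assms(2) _ T(2,3)])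
      show "g \<in> Bnu \<nu>" using g(1) by (simp add: Bnu_unit_ball_def)
      fix p and k :: nat assume "p \<in> insert None (Some ` T)" "k < 4"
      then have "(p, k) \<in> I" by (simp add: I_def)
      then obtain j where "from_nat_into I j = (p, k)"
        using from_nat_into_surj[OF \<open>countable I\<close>] by blast
      then show "\<epsilon> \<le> Re (\<phi> g - comb_apply (rotation_atom (2 * C * A) p k) g)"
        using g(2)[of j] by (simp add: L_def)
    qed
  qed
qed

lemma Bnu_eq_zero_of_samples:
  assumes "k \<in> Bnu \<nu>" "k 0 = 0" "\<And>w. w \<in> U \<Longrightarrow> deriv k w = 0" "z \<in> ball 0 1"
  shows "k z = 0"
proof -
  have "norm_nu \<nu> k \<le> C * 0"
    using assms(2,3) by (intro norm_nu_le_of_dense_samples[OF assms(1) closure_subset]) auto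
  have deriv0: "deriv k w = 0" if "w \<in> ball 0 1" for w
  proof -
    have "cmod (deriv k w) * \<nu> w \<le> 0"
      using norm_nu_ge_deriv[OF assms(1) that] \<open>norm_nu \<nu> k \<le> C * 0\<close> by simp
    then show ?thesis using nu_pos[OF that] by (simp add: mult_le_0_iff)
  qed
  have "(k has_field_derivative 0) (at w within ball 0 1)" if "w \<in> ball 0 1" for w
  proof -
    have "k field_differentiable at w"
      using Bnu_holomorphic[OF assms(1)] that holomorphic_on_imp_differentiable_at open_ball by blast
    then have "(k has_field_derivative deriv k w) (at w)"
      by (simp add: DERIV_deriv_iff_field_differentiable)
    then show ?thesis using deriv0[OF that] by (simp add: has_field_derivative_at_within)
  qed
  then obtain c where "\<forall>w\<in>ball 0 1. k w = c"
    using has_field_derivative_zero_constant[OF convex_ball] by blast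
  then show ?thesis using assms(2,4) by simp
qed

lemma admissible_approximation_step:
  assumes "admissible \<psi> B" "0 < B"
  obtains L where "comb_points L \<subseteq> U" "comb_norm L \<le> 2 * C * B"
    "admissible (\<lambda>g. \<psi> g - comb_apply L g) (B / 2)"
proof -
  obtain L where L: "comb_points L \<subseteq> U" "comb_norm L \<le> 2 * C * B"
    "\<And>g. g \<in> Bnu \<nu> \<Longrightarrow> cmod (\<psi> g - comb_apply L g) \<le> B / 2 * norm_nu \<nu> g"
    using admissible_approximation[OF assms(1), of "B / 2"] assms(2) by auto
  have "admissible (\<lambda>g. \<psi> g - comb_apply L g) (B / 2)"
    using L(1) U_sub assms(2)
    by (intro admissible_bound_mono[OF admissible_diff[OF assms(1) admissible_comb_apply]] L(3)) auto
  then show ?thesis using that L(1,2) by blast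
qed

lemma admissible_approximation_series:
  assumes "admissible \<phi> A" "0 < A"
  obtains Ls where "\<And>n. comb_points (Ls n) \<subseteq> U" "\<And>n. comb_norm (Ls n) \<le> 2 * C * A * (1/2) ^ n"
    "\<And>n. admissible (\<lambda>g. \<phi> g - (\<Sum>m<n. comb_apply (Ls m) g)) (A * (1/2) ^ n)"
proof -
  define S where "S \<psi> B = (SOME L. comb_points L \<subseteq> U \<and> comb_norm L \<le> 2 * C * B \<and>
      admissible (\<lambda>g. \<psi> g - comb_apply L g) (B / 2))" for \<psi> B
  have S: "comb_points (S \<psi> B) \<subseteq> U \<and> comb_norm (S \<psi> B) \<le> 2 * C * B \<and>
      admissible (\<lambda>g. \<psi> g - comb_apply (S \<psi> B) g) (B / 2)" if "admissible \<psi> B" "0 < B" for \<psi> B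
    unfolding S_def by (rule someI_ex) (blast intro: admissible_approximation_step[OF that])
  define R where "R = rec_nat \<phi> (\<lambda>n \<psi> g. \<psi> g - comb_apply (S \<psi> (A * (1/2) ^ n)) g)"
  define Ls where "Ls n = S (R n) (A * (1/2) ^ n)" for n
  have R_0: "R 0 = \<phi>" and R_Suc: "R (Suc n) = (\<lambda>g. R n g - comb_apply (Ls n) g)" for n
    by (simp_all add: R_def Ls_def)
  have R_admissible: "admissible (R n) (A * (1/2) ^ n)" for n
  proof (induction n)
    case (Suc n)
    then show ?case using S[OF Suc] assms(2) by (simp add: R_Suc Ls_def mult.assoc)
  qed (simp add: R_0 assms(1))
  have R_eq: "R n = (\<lambda>g. \<phi> g - (\<Sum>m<n. comb_apply (Ls m) g))" for n
    by (induction n) (simp_all add: R_0 R_Suc diff_diff_eq)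
  show ?thesis
  proof (rule that)
    show "comb_points (Ls n) \<subseteq> U" for n
      using S[OF R_admissible[of n]] assms(2) by (simp add: Ls_def)
    show "comb_norm (Ls n) \<le> 2 * C * A * (1/2) ^ n" for n
      using S[OF R_admissible[of n]] assms(2) by (simp add: Ls_def mult.assoc)
    show "admissible (\<lambda>g. \<phi> g - (\<Sum>m<n. comb_apply (Ls m) g)) (A * (1/2) ^ n)" for n
      using R_admissible[of n] by (simp add: R_eq)
  qed
qed

end

section \<open>Vector-valued functions\<close>

locale dual_sampling = lc_space sc p + bloch_sampling \<nu> U C
  for sc :: "complex \<Rightarrow> 'e::ab_group_add \<Rightarrow> 'e" and p :: "'i \<Rightarrow> 'e \<Rightarrow> real" and \<nu> U C +
  fixes G :: "('e \<Rightarrow> complex) set"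
  assumes G_dual: "G \<subseteq> dual_lc sc p"
    and G_separating: "\<forall>x. (\<forall>e\<in>G. e x = 0) \<longrightarrow> x = 0"
begin

lemma separating_eqI:
  assumes "\<And>e. e \<in> G \<Longrightarrow> e x = e y"
  shows "x = y"
proof -
  have "e (x - y) = 0" if "e \<in> G" for e
    using assms[OF that] dual_diff[of e x y] G_dual that by auto
  then have "x - y = 0" using G_separating by blast
  then show ?thesis by simp
qed

definition representer :: "(('e \<Rightarrow> complex) \<Rightarrow> complex) \<Rightarrow> 'e" where
  "representer a = (SOME x. \<forall>e\<in>G. e x = a e)"

lemma representer_eqI:
  assumes "\<And>e. e \<in> G \<Longrightarrow> e x = a e"
  shows "representer a = x"
  unfolding representer_def
proof (rule some_equality)
  fix y assume "\<forall>e\<in>G. e y = a e"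
  then show "y = x" using assms by (intro separating_eqI) simp
qed (use assms in blast)

lemma dual_comp_Bnu_E:
  assumes "F \<in> Bnu_E sc p \<nu>" "e \<in> dual_lc sc p"
  shows "(\<lambda>z. e (F z)) \<in> Bnu \<nu>" "\<And>z. z \<in> ball 0 1 \<Longrightarrow> deriv (\<lambda>z. e (F z)) z = e (derivE sc p F z)"
proof -
  have has_deriv: "((\<lambda>w. e (F w)) has_field_derivative e (derivE sc p F z)) (at z)" if "z \<in> ball 0 1" for z
    using assms that unfolding Bnu_E_def by (blast intro: dual_has_field_derivative has_derivE_derivE)
  then show deriv: "deriv (\<lambda>z. e (F z)) z = e (derivE sc p F z)" if "z \<in> ball 0 1" for z
    using that by (blast intro: DERIV_imp_deriv)
  obtain i K where "K \<ge> 0" and K: "\<And>y. cmod (e y) \<le> K * p i y"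
    using dual_bounded[OF assms(2)] by blast
  obtain M where M: "\<And>z. z \<in> ball 0 1 \<Longrightarrow> p i (derivE sc p F z) * \<nu> z \<le> M"
    using assms(1) unfolding Bnu_E_def bdd_above_def by blast
  have "cmod (deriv (\<lambda>z. e (F z)) z) * \<nu> z \<le> K * M" if "z \<in> ball 0 1" for z
  proof -
    have "cmod (deriv (\<lambda>z. e (F z)) z) * \<nu> z \<le> K * p i (derivE sc p F z) * \<nu> z"
      using deriv[OF that] K nu_pos[OF that] by (intro mult_right_mono) auto
    also have "\<dots> \<le> K * M" using M[OF that] \<open>K \<ge> 0\<close> by (simp add: mult.assoc mult_left_mono)
    finally show ?thesis .
  qed
  moreover have "(\<lambda>z. e (F z)) holomorphic_on ball 0 1"
    using has_deriv holomorphic_on_open open_ball by blast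
  ultimately show "(\<lambda>z. e (F z)) \<in> Bnu \<nu>" unfolding Bnu_def by (auto intro!: bdd_aboveI2[where M = "K * M"])
qed

lemma Bnu_E_unique:
  assumes "F \<in> Bnu_E sc p \<nu>" "H \<in> Bnu_E sc p \<nu>" "H 0 = F 0"
    and "\<And>w. w \<in> U \<Longrightarrow> derivE sc p H w = derivE sc p F w" "z \<in> ball 0 1"
  shows "H z = F z"
proof (rule separating_eqI)
  fix e assume "e \<in> G"
  then have e: "e \<in> dual_lc sc p" using G_dual by blast
  define k where "k = (\<lambda>w. e (H w) - e (F w))"
  have k: "k \<in> Bnu \<nu>"
    using Bnu_linear[OF dual_comp_Bnu_E(1)[OF assms(2) e] dual_comp_Bnu_E(1)[OF assms(1) e], of 1 "-1"]
    by (simp add: k_def)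
  have k_deriv: "deriv k w = 0" if "w \<in> U" for w
  proof -
    have "w \<in> ball 0 1" using that U_sub by blast
    then have "deriv k w = e (derivE sc p H w) - e (derivE sc p F w)"
      unfolding k_def
      using deriv_linear[OF Bnu_holomorphic[OF dual_comp_Bnu_E(1)[OF assms(2) e]]
          Bnu_holomorphic[OF dual_comp_Bnu_E(1)[OF assms(1) e]] open_ball, of w 1 "-1"]
        dual_comp_Bnu_E(2)[OF assms(1) e] dual_comp_Bnu_E(2)[OF assms(2) e]
      by simp
    then show ?thesis using assms(4)[OF that] by simp
  qed
  have "k 0 = 0" using assms(3) by (simp add: k_def)
  then have "k z = 0" by (rule Bnu_eq_zero_of_samples[OF k _ k_deriv assms(5)])
  then show "e (H z) = e (F z)" by (simp add: k_def)
qed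

end

locale weak_extension = dual_sampling sc p \<nu> U C G
  for sc :: "complex \<Rightarrow> 'e::ab_group_add \<Rightarrow> 'e" and p :: "'i \<Rightarrow> 'e \<Rightarrow> real" and \<nu> U C G +
  fixes f0 :: 'e and f1 :: "complex \<Rightarrow> 'e"
  assumes locally_complete: "locally_complete sc p"
    and f1_bounded: "\<forall>i. bdd_above ((\<lambda>z. p i (f1 z) * \<nu> z) ` U)"
    and weakly_extendable: "\<forall>e\<in>G. \<exists>g\<in>Bnu \<nu>. g 0 = e f0 \<and> (\<forall>z\<in>U. deriv g z = e (f1 z))"
begin

definition data_bound :: "'i \<Rightarrow> real" where
  "data_bound i = max (p i f0) (sup0 (\<lambda>w. p i (f1 w) * \<nu> w) U)"

lemma data_bound_nonneg: "0 \<le> data_bound i"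
  unfolding data_bound_def using p_nonneg[of i f0] by linarith

lemma data_bound_f1: "w \<in> U \<Longrightarrow> p i (f1 w) * \<nu> w \<le> data_bound i"
  unfolding data_bound_def using sup0_upper[OF f1_bounded[rule_format]] by (meson max.coboundedI2)

definition scalar_ext :: "('e \<Rightarrow> complex) \<Rightarrow> complex \<Rightarrow> complex" where
  "scalar_ext e = (SOME g. g \<in> Bnu \<nu> \<and> g 0 = e f0 \<and> (\<forall>z\<in>U. deriv g z = e (f1 z)))"

lemma scalar_ext_spec:
  assumes "e \<in> G"
  shows "scalar_ext e \<in> Bnu \<nu> \<and> scalar_ext e 0 = e f0 \<and> (\<forall>z\<in>U. deriv (scalar_ext e) z = e (f1 z))"
proof -
  have "\<exists>g. g \<in> Bnu \<nu> \<and> g 0 = e f0 \<and> (\<forall>z\<in>U. deriv g z = e (f1 z))"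
    using weakly_extendable assms by blast
  then show ?thesis unfolding scalar_ext_def by (rule someI_ex)
qed

definition comb_vector :: "sample_comb \<Rightarrow> 'e" where
  "comb_vector L = sc (fst L) f0 + (\<Sum>(c, w)\<leftarrow>snd L. sc (c * of_real (\<nu> w)) (f1 w))"

lemma p_comb_vector_le:
  assumes "comb_points L \<subseteq> U"
  shows "p i (comb_vector L) \<le> comb_norm L * data_bound i"
proof -
  obtain a xs where L: "L = (a, xs)" by (cases L)
  have "p i (\<Sum>(c, w)\<leftarrow>xs. sc (c * of_real (\<nu> w)) (f1 w)) \<le> (\<Sum>(c, w)\<leftarrow>xs. cmod c) * data_bound i"
    if "snd ` set xs \<subseteq> U" for xs
    using that
  proof (induction xs)
    case (Cons cw xs)
    obtain c w where cw: "cw = (c, w)" by (cases cw)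
    then have "w \<in> U" using Cons.prems by auto
    then have "0 < \<nu> w" using U_sub nu_pos by blast
    then have "p i (sc (c * of_real (\<nu> w)) (f1 w)) = cmod c * (p i (f1 w) * \<nu> w)"
      by (simp add: p_sc norm_mult mult_ac)
    also have "\<dots> \<le> cmod c * data_bound i"
      using data_bound_f1[OF \<open>w \<in> U\<close>] by (simp add: mult_left_mono)
    finally have "p i (sc (c * of_real (\<nu> w)) (f1 w)) \<le> cmod c * data_bound i" .
    moreover have "p i (\<Sum>(c, w)\<leftarrow>xs. sc (c * of_real (\<nu> w)) (f1 w)) \<le> (\<Sum>(c, w)\<leftarrow>xs. cmod c) * data_bound i"
      using Cons by auto
    ultimately have "p i (sc (c * of_real (\<nu> w)) (f1 w)) + p i (\<Sum>(c, w)\<leftarrow>xs. sc (c * of_real (\<nu> w)) (f1 w))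
        \<le> cmod c * data_bound i + (\<Sum>(c, w)\<leftarrow>xs. cmod c) * data_bound i"
      by (rule add_mono)
    then have "p i (sc (c * of_real (\<nu> w)) (f1 w) + (\<Sum>(c, w)\<leftarrow>xs. sc (c * of_real (\<nu> w)) (f1 w)))
        \<le> cmod c * data_bound i + (\<Sum>(c, w)\<leftarrow>xs. cmod c) * data_bound i"
      by (rule order_trans[OF p_triangle])
    then show ?case by (simp add: cw distrib_right)
  qed simp
  then have "p i (\<Sum>(c, w)\<leftarrow>xs. sc (c * of_real (\<nu> w)) (f1 w)) \<le> (\<Sum>(c, w)\<leftarrow>xs. cmod c) * data_bound i"
    using assms by (simp add: L comb_points_def)
  moreover have "p i (sc a f0) \<le> cmod a * data_bound i"
    unfolding data_bound_def by (simp add: p_sc mult_left_mono)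
  ultimately have "p i (comb_vector L) \<le> cmod a * data_bound i + (\<Sum>(c, w)\<leftarrow>xs. cmod c) * data_bound i"
    using p_triangle[of i "sc a f0" "\<Sum>(c, w)\<leftarrow>xs. sc (c * of_real (\<nu> w)) (f1 w)"]
    unfolding L comb_vector_def by simp
  then show ?thesis by (simp add: L comb_norm_def distrib_right)
qed

lemma dual_comb_vector:
  assumes "e \<in> G" "comb_points L \<subseteq> U"
  shows "e (comb_vector L) = comb_apply L (scalar_ext e)"
proof -
  have e: "e \<in> dual_lc sc p" using assms(1) G_dual by blast
  obtain a xs where L: "L = (a, xs)" by (cases L)
  have "e (\<Sum>(c, w)\<leftarrow>xs. sc (c * of_real (\<nu> w)) (f1 w)) = (\<Sum>(c, w)\<leftarrow>xs. c * of_real (\<nu> w) * deriv (scalar_ext e) w)"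
    if "snd ` set xs \<subseteq> U" for xs
    using that by (induction xs) (auto simp: dual_add[OF e] dual_sc[OF e] dual_zero[OF e] scalar_ext_spec[OF assms(1)])
  then show ?thesis
    using assms(2) scalar_ext_spec[OF assms(1)] unfolding L comb_vector_def comb_apply_def comb_points_def
    by (simp add: dual_add[OF e] dual_sc[OF e])
qed

lemma comb_vector_series_Cauchy:
  assumes "\<And>k. comb_points (Ls k) \<subseteq> U" "\<And>k. comb_norm (Ls k) \<le> K * (1/2) ^ k" "0 \<le> K" "n \<le> m"
  shows "p i ((\<Sum>k<m. comb_vector (Ls k)) - (\<Sum>k<n. comb_vector (Ls k))) \<le> 2 * K * (1/2) ^ n * data_bound i"
proof -
  have "(\<Sum>k<m. comb_vector (Ls k)) - (\<Sum>k<n. comb_vector (Ls k)) = (\<Sum>k\<in>{n..<m}. comb_vector (Ls k))"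
    using sum_diff_nat_ivl[of 0 n m "\<lambda>k. comb_vector (Ls k)"] assms(4) by (simp add: atLeast0LessThan)
  then have "p i ((\<Sum>k<m. comb_vector (Ls k)) - (\<Sum>k<n. comb_vector (Ls k)))
      \<le> (\<Sum>k\<in>{n..<m}. p i (comb_vector (Ls k)))"
    by (simp add: p_sum)
  also have "\<dots> \<le> (\<Sum>k\<in>{n..<m}. K * data_bound i * (1/2) ^ k)"
  proof (rule sum_mono)
    fix k
    have "p i (comb_vector (Ls k)) \<le> comb_norm (Ls k) * data_bound i"
      by (rule p_comb_vector_le[OF assms(1)])
    also have "\<dots> \<le> K * (1/2) ^ k * data_bound i"
      using assms(2) data_bound_nonneg by (rule mult_right_mono)
    finally show "p i (comb_vector (Ls k)) \<le> K * data_bound i * (1/2) ^ k" by (simp add: mult_ac)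
  qed
  also have "\<dots> = K * data_bound i * (\<Sum>k\<in>{n..<m}. (1/2) ^ k)"
    by (simp add: sum_distrib_left)
  also have "\<dots> \<le> K * data_bound i * (2 * (1/2) ^ n)"
    using assms(3) data_bound_nonneg by (intro mult_left_mono geometric_tail_le) auto
  finally show ?thesis by (simp add: mult_ac)
qed

lemma dual_comb_vector_series_tendsto:
  assumes "e \<in> G" "\<And>n. comb_points (Ls n) \<subseteq> U"
    and remainder: "\<And>n. admissible (\<lambda>g. \<phi> g - (\<Sum>m<n. comb_apply (Ls m) g)) (A * (1/2) ^ n)"
  shows "(\<lambda>n. e (\<Sum>m<n. comb_vector (Ls m))) \<longlonglongrightarrow> \<phi> (scalar_ext e)"
proof -
  have e: "e \<in> dual_lc sc p" using assms(1) G_dual by blast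
  define r where "r n = \<phi> (scalar_ext e) - (\<Sum>m<n. comb_apply (Ls m) (scalar_ext e))" for n
  have r_bound: "cmod (r n) \<le> A * norm_nu \<nu> (scalar_ext e) * (1/2) ^ n" for n
    using admissible_bound[OF remainder scalar_ext_spec[OF assms(1), THEN conjunct1], of n] by (simp add: r_def mult_ac)
  have "(\<lambda>n. A * norm_nu \<nu> (scalar_ext e) * (1/2::real) ^ n) \<longlonglongrightarrow> 0"
    by (intro tendsto_mult_right_zero LIMSEQ_realpow_zero) auto
  then have "r \<longlonglongrightarrow> 0"
    by (rule Lim_null_comparison[OF always_eventually, rotated]) (use r_bound in auto)
  moreover have "e (\<Sum>m<n. comb_vector (Ls m)) = \<phi> (scalar_ext e) - r n" for n
    using dual_comb_vector[OF assms(1,2)] by (simp add: r_def dual_sum[OF e])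
  ultimately show ?thesis using tendsto_diff[OF tendsto_const[of "\<phi> (scalar_ext e)"] \<open>r \<longlonglongrightarrow> 0\<close>] by simp
qed

text \<open>The vector realising phi is the sum of the series of the comb_vector (Ls n), where the
  Ls n are the successive approximations of phi by sample combinations.\<close>

lemma representation:
  assumes "admissible \<phi> A" "0 < A"
  obtains x where "\<And>e. e \<in> G \<Longrightarrow> e x = \<phi> (scalar_ext e)" "\<And>i. p i x \<le> 4 * C * A * data_bound i"
proof -
  obtain Ls where Ls: "\<And>n. comb_points (Ls n) \<subseteq> U" "\<And>n. comb_norm (Ls n) \<le> 2 * C * A * (1/2) ^ n"
    and remainder: "\<And>n. admissible (\<lambda>g. \<phi> g - (\<Sum>m<n. comb_apply (Ls m) g)) (A * (1/2) ^ n)"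
    by (rule admissible_approximation_series[OF assms]) blast
  define xs where "xs n = (\<Sum>m<n. comb_vector (Ls m))" for n
  define \<beta> where "\<beta> n = 4 * C * A * (1/2) ^ n" for n :: nat
  have "xs 0 = 0" by (simp add: xs_def)
  have "\<beta> \<longlonglongrightarrow> 0" unfolding \<beta>_def by (intro tendsto_mult_right_zero LIMSEQ_realpow_zero) auto
  have "0 \<le> \<beta> n" for n using C_pos assms(2) by (simp add: \<beta>_def)
  have Cauchy: "p i (xs m - xs n) \<le> \<beta> n * data_bound i" if "n \<le> m" for i m n
  proof -
    have "0 \<le> 2 * C * A" using C_pos assms(2) by simp
    then show ?thesis
      using comb_vector_series_Cauchy[OF Ls _ that, where i = i] by (simp add: xs_def \<beta>_def)
  qed
  obtain x where x: "\<And>i n. p i (x - xs n) \<le> \<beta> n * data_bound i"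
    using locally_complete_limit[OF data_bound_nonneg locally_complete \<open>xs 0 = 0\<close> \<open>\<beta> \<longlonglongrightarrow> 0\<close>
        \<open>\<And>n. 0 \<le> \<beta> n\<close> Cauchy] by blast
  have "e x = \<phi> (scalar_ext e)" if "e \<in> G" for e
  proof (rule LIMSEQ_unique)
    have "e \<in> dual_lc sc p" using that G_dual by blast
    then show "(\<lambda>n. e (xs n)) \<longlonglongrightarrow> e x" by (rule dual_tendsto_of_p_bound[OF _ \<open>\<beta> \<longlonglongrightarrow> 0\<close> x])
    show "(\<lambda>n. e (xs n)) \<longlonglongrightarrow> \<phi> (scalar_ext e)"
      unfolding xs_def by (rule dual_comb_vector_series_tendsto[OF that Ls(1) remainder])
  qed
  moreover have "p i x \<le> 4 * C * A * data_bound i" for i using x[of i 0] by (simp add: xs_def \<beta>_def)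
  ultimately show ?thesis using that by blast
qed

definition extension :: "complex \<Rightarrow> 'e" where
  "extension z = representer (\<lambda>e. scalar_ext e z)"

definition extension_deriv :: "complex \<Rightarrow> 'e" where
  "extension_deriv z = representer (\<lambda>e. deriv (scalar_ext e) z)"

lemma dual_extension:
  assumes "z \<in> ball 0 1" "e \<in> G"
  shows "e (extension z) = scalar_ext e z"
proof -
  obtain A where "A > 0" "admissible (\<lambda>g. g z) A" by (rule admissible_eval[OF assms(1)])
  obtain x where "\<And>e. e \<in> G \<Longrightarrow> e x = scalar_ext e z"
    using \<open>admissible (\<lambda>g. g z) A\<close> \<open>A > 0\<close> by (rule representation) blast
  then show ?thesis using assms(2) by (simp add: extension_def representer_eqI)
qed

lemma extension_deriv:
  assumes "z \<in> ball 0 1"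
  shows "\<And>e. e \<in> G \<Longrightarrow> e (extension_deriv z) = deriv (scalar_ext e) z"
    and "\<And>i. p i (extension_deriv z) \<le> 4 * C * (1 / \<nu> z) * data_bound i"
proof -
  obtain x where x: "\<And>e. e \<in> G \<Longrightarrow> e x = deriv (scalar_ext e) z"
      "\<And>i. p i x \<le> 4 * C * (1 / \<nu> z) * data_bound i"
    using representation[OF admissible_deriv[OF assms]] nu_pos[OF assms] by auto
  then have "extension_deriv z = x" by (simp add: extension_deriv_def representer_eqI)
  then show "\<And>e. e \<in> G \<Longrightarrow> e (extension_deriv z) = deriv (scalar_ext e) z"
    and "\<And>i. p i (extension_deriv z) \<le> 4 * C * (1 / \<nu> z) * data_bound i"
    using x by simp_all
qed

lemma extension_difference_quotient_eq:
  assumes "z \<in> ball 0 1" "z + h \<in> ball 0 1"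
    and "\<And>e. e \<in> G \<Longrightarrow> e x = (scalar_ext e (z + h) - scalar_ext e z) / h - deriv (scalar_ext e) z"
  shows "sc (1 / h) (extension (z + h) - extension z) - extension_deriv z = x"
proof (rule separating_eqI)
  fix e assume "e \<in> G"
  then have e: "e \<in> dual_lc sc p" using G_dual by blast
  show "e (sc (1 / h) (extension (z + h) - extension z) - extension_deriv z) = e x"
    using assms(3)[OF \<open>e \<in> G\<close>] dual_extension[OF _ \<open>e \<in> G\<close>] extension_deriv(1)[OF assms(1) \<open>e \<in> G\<close>]
      assms(1,2)
    by (simp add: dual_diff[OF e] dual_sc[OF e] divide_inverse mult.commute)
qed

lemma has_derivE_extension:
  assumes "z \<in> ball 0 1"
  shows "has_derivE sc p extension (extension_deriv z) z"
  unfolding has_derivE_def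
proof
  fix i
  obtain r K where "r > 0" "K > 0" and quotient: "\<And>h. h \<noteq> 0 \<Longrightarrow> cmod h \<le> r \<Longrightarrow> z + h \<in> ball 0 1 \<and>
      admissible (\<lambda>g. (g (z + h) - g z) / h - deriv g z) (K * cmod h)"
    by (rule admissible_difference_quotient[OF assms]) blast
  have bound: "p i (sc (1 / h) (extension (z + h) - extension z) - extension_deriv z) \<le> 4 * C * K * cmod h * data_bound i"
    if h: "h \<noteq> 0" "cmod h \<le> r" for h
  proof -
    have "admissible (\<lambda>g. (g (z + h) - g z) / h - deriv g z) (K * cmod h)" using quotient[OF h] by blast
    moreover have "0 < K * cmod h" using \<open>K > 0\<close> h(1) by simp
    ultimately obtain x where x: "\<And>e. e \<in> G \<Longrightarrow> e x = (scalar_ext e (z + h) - scalar_ext e z) / h - deriv (scalar_ext e) z"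
        "p i x \<le> 4 * C * (K * cmod h) * data_bound i"
      by (rule representation) blast
    have "sc (1 / h) (extension (z + h) - extension z) - extension_deriv z = x"
      using quotient[OF h] by (intro extension_difference_quotient_eq[OF assms _ x(1)]) blast+
    then show ?thesis using x(2) by (simp add: mult_ac)
  qed
  show "((\<lambda>h. p i (sc (1 / h) (extension (z + h) - extension z) - extension_deriv z)) \<longlongrightarrow> 0) (at 0)"
  proof (rule tendsto_sandwich[where f = "\<lambda>_. 0" and h = "\<lambda>h. 4 * C * K * cmod h * data_bound i"])
    show "\<forall>\<^sub>F h in at 0. 0 \<le> p i (sc (1 / h) (extension (z + h) - extension z) - extension_deriv z)"
      by (simp add: p_nonneg)
    show "\<forall>\<^sub>F h in at 0. p i (sc (1 / h) (extension (z + h) - extension z) - extension_deriv z)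
        \<le> 4 * C * K * cmod h * data_bound i"
      unfolding eventually_at using \<open>r > 0\<close> bound by (intro exI[of _ r]) (auto simp: dist_norm)
    have "((\<lambda>h::complex. 4 * C * K * cmod h * data_bound i) \<longlongrightarrow> 4 * C * K * cmod (0::complex) * data_bound i) (at 0)"
      by (intro tendsto_intros)
    then show "((\<lambda>h::complex. 4 * C * K * cmod h * data_bound i) \<longlongrightarrow> 0) (at 0)" by simp
  qed simp
qed

lemma extension_in_Bnu_E: "extension \<in> Bnu_E sc p \<nu>"
proof -
  have "p i (derivE sc p extension z) * \<nu> z \<le> 4 * C * data_bound i" if "z \<in> ball 0 1" for i z
  proof -
    have "p i (derivE sc p extension z) * \<nu> z \<le> 4 * C * (1 / \<nu> z) * data_bound i * \<nu> z"
      using derivE_eqI[OF has_derivE_extension[OF that]] extension_deriv(2)[OF that] nu_pos[OF that]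
      by (intro mult_right_mono) auto
    then show ?thesis using nu_pos[OF that] by simp
  qed
  moreover have "\<exists>d. has_derivE sc p extension d z" if "z \<in> ball 0 1" for z
    using has_derivE_extension[OF that] by blast
  ultimately show ?thesis unfolding Bnu_E_def by (auto intro!: bdd_aboveI2)
qed

lemma extension_0: "extension 0 = f0"
  by (rule separating_eqI) (simp add: dual_extension scalar_ext_spec)

lemma derivE_extension:
  assumes "w \<in> U"
  shows "derivE sc p extension w = f1 w"
proof (rule separating_eqI)
  fix e assume "e \<in> G"
  have "w \<in> ball 0 1" using assms U_sub by blast
  then have "derivE sc p extension w = extension_deriv w" by (rule derivE_eqI[OF has_derivE_extension])
  then show "e (derivE sc p extension w) = e (f1 w)"
    using extension_deriv(1)[OF \<open>w \<in> ball 0 1\<close> \<open>e \<in> G\<close>] scalar_ext_spec[OF \<open>e \<in> G\<close>] assms by simp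
qed

end

theorem mainTheorem8:
  fixes sc :: "complex \<Rightarrow> 'e::ab_group_add \<Rightarrow> 'e"
    and p :: "'i \<Rightarrow> 'e \<Rightarrow> real"
    and G :: "('e \<Rightarrow> complex) set"
    and \<nu> :: "complex \<Rightarrow> real"
    and Ustar :: "complex set"
    and f0 :: 'e
    and f1 :: "complex \<Rightarrow> 'e"
  assumes E: "lcHs sc p"
    and loc_compl: "locally_complete sc p"
    and G_dual: "G \<subseteq> dual_lc sc p"
    and G_subspace: "(\<lambda>_. 0) \<in> G" "\<forall>e\<in>G. \<forall>e'\<in>G. (\<lambda>x. e x + e' x) \<in> G"
                    "\<forall>e\<in>G. \<forall>a::complex. (\<lambda>x. a * e x) \<in> G"
    and G_sep: "\<forall>x. (\<forall>e\<in>G. e x = 0) \<longrightarrow> x = 0"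
    and nu_cont: "continuous_on (ball 0 1) \<nu>"
    and nu_pos: "\<forall>z\<in>ball 0 1. \<nu> z > 0"
    and U_sub: "Ustar \<subseteq> ball 0 1"
    and sampling: "\<exists>C>0. \<forall>g\<in>Bnu \<nu>.
        norm_nu \<nu> g \<le> C * max (cmod (g 0)) (sup0 (\<lambda>z. cmod (deriv g z) * \<nu> z) Ustar)"
    and f_bdd: "\<forall>i. bdd_above ((\<lambda>z. p i (f1 z) * \<nu> z) ` Ustar)"
    and f_weak: "\<forall>e\<in>G. \<exists>g\<in>Bnu \<nu>. g 0 = e f0 \<and> (\<forall>z\<in>Ustar. deriv g z = e (f1 z))"
  shows "\<exists>F\<in>Bnu_E sc p \<nu>. F 0 = f0 \<and> (\<forall>z\<in>Ustar. derivE sc p F z = f1 z) \<and>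
           (\<forall>H\<in>Bnu_E sc p \<nu>. H 0 = f0 \<and> (\<forall>z\<in>Ustar. derivE sc p H z = f1 z)
                \<longrightarrow> (\<forall>z\<in>ball 0 1. H z = F z))"
proof -
  obtain C where "0 < C"
    and C: "\<forall>g\<in>Bnu \<nu>. norm_nu \<nu> g \<le> C * max (cmod (g 0)) (sup0 (\<lambda>z. cmod (deriv g z) * \<nu> z) Ustar)"
    using sampling by blast
  interpret weak_extension sc p \<nu> Ustar C G f0 f1
    using E nu_cont nu_pos U_sub \<open>0 < C\<close> C G_dual G_sep loc_compl f_bdd f_weak
    by unfold_locales auto
  have "H z = extension z"
    if "H \<in> Bnu_E sc p \<nu>" "H 0 = f0" "\<forall>w\<in>Ustar. derivE sc p H w = f1 w" "z \<in> ball 0 1" for H z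
    using Bnu_E_unique[OF extension_in_Bnu_E that(1)] that(2-4) extension_0 derivE_extension by simp
  then show ?thesis using extension_in_Bnu_E extension_0 derivE_extension by blast
qed

end
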